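(* Consider REShare with parameter $\varepsilon^*>0$ run on a request sequence in which every request has infinite duration, so that the execution is divided into consecutive intervals $h=1,2,\ldots$, interval $h$ using parameter $\varepsilon_h=\varepsilon^*/2^{h-1}$ and handling the subsequence $\sigma_h$ of requests arriving in it. Then for every $k=1,2,\ldots$, $$\sum_{h=1}^k\phi(\mathrm{REShare},\sigma_h)\le(2+4\varepsilon_k)\sum_{h=1}^k\tilde\phi(\mathrm{SHA}(\varepsilon_h),\sigma_h).$$
   Context: Network: a layered graph of finitely many nodes (datacenters), $n$ in total; a node is at layer $\ell\ge0$ if its distance from the closest leaf is $\ell$. Every node can host arbitrarily many virtual machines (VMs). Each VM $b$ runs exactly one VNF $v$ from a finite set $\mathcal V$, has maximum computing capability $\bar\mu>0$ and allocated capability $\mu_b\le\bar\mu$. VNF $v$ has complexity $\theta_v\in(0,1]$. Requests: requests $r$ arrive online with a set $\mathcal V_r\subseteq\mathcal V$ of VNFs, duration $\tau_r$, load $\lambda_r\ge\lambda_{\min}=\inf_r\lambda_r>0$ ($\lambda_{\min}$ known), delay target $D_r$. For $v\in\mathcal V_r$, $(r,v)$ is a job. For a VM $b$ running $v$, $\Lambda(b)$ is the total load of its jobs; each job on $b$ experiences processing latency $1/(\mu_b-\theta_v\Lambda(b))$. Forwarding latency to layer $\ell$ is $d_\ell$, strictly increasing. The latency of $r$ is the maximum $d_\ell$ over layers hosting its jobs plus the sum of processing latencies. Fair delay allocation: $M_{r,v}=1/(\bar\mu-\theta_v\lambda_r)$; $\ell^*(r)$ is the highest layer $\ell$ with $d_\ell+\sum_{v}M_{r,v}\le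 D_r$; $D_r^v=\frac{M_{r,v}}{\sum_{u\in\mathcal V_r}M_{r,u}}(D_r-d_{\ell^*(r)})$. Feasible deployment of $r$: each job on a VM $b$ running $v$ with $\mu_b\le\bar\mu$ and $1/(\mu_b-\theta_v\Lambda(b))\le D_r^v$, and latency of $r$ at most $D_r$. Cost: a VM at a node of layer $\ell$ hosting at least one job costs $\kappa_f^\ell+\kappa_p^\ell\mu_b$, with $\kappa_f^\ell,\kappa_p^\ell$ strictly decreasing in $\ell$; $\kappa^\ell=\kappa_f^\ell+\kappa_p^\ell\bar\mu$. Latency ranges for $\varepsilon>0$: $L_0=[\frac{1}{\bar\mu-\lambda_{\min}},\frac{1}{\bar\mu-\lambda_{\min}(1+\varepsilon)}]$, $L_j=(\frac{1}{\bar\mu-\lambda_{\min}(1+\varepsilon)^j},\frac{1}{\bar\mu-\lambda_{\min}(1+\varepsilon)^{j+1}}]$, $j\ge1$; job $(r,v)$ is associated with $L_j$ if $D_r^v\in L_j$. c-REShare$(\varepsilon)$: on arrival of $r$, choose a node $i^*$ at layer $\ell^*(r)$; for each $v\in\mathcal V_r$ with $D_r^v\in L_j$, a VM in $i^*$ running $v$ and hosting jobs of $L_j$ is viable if running it at speed $\bar\mu$ with the added load $\lambda_r$ gives latency $\frac{1}{\bar\mu-\theta_v(\Lambda(b)+\lambda_r)}$ at most the fair delay allocation of $(r,v)$ and of every job already on it; place $(r,v)$ on the viable VM with largest $\Lambda(b)$ (capability set to $\theta_v\Lambda(b)+1/\min_{(r',v)\in b}D^v_{r'}$, including the new job), or on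 a new VM with capability $\theta_v\lambda_r+1/D_r^v$ if none is viable. SHA$(\varepsilon)$: each job associated with $L_j$ is replaced by a top job with the same load and delay constraint $D_j=\frac{1}{\bar\mu-\lambda_{\min}(1+\varepsilon)^{j+1}}$; SHA$(\varepsilon)$ is the minimum-cost placement of top jobs in which each job of $r$ is in a single node at a layer where deploying $r$ is feasible, a job's load may be split fractionally among VMs running $v$ in that node, jobs of different ranges never share a VM, and each top job meets its relaxed constraint. $\tilde\phi(\mathrm{SHA}(\varepsilon),\sigma)$ denotes the total cost of only the full VMs (running at capability $\bar\mu$) used by SHA$(\varepsilon)$ on input $\sigma$. REShare (parameter $\varepsilon^*>0$; $\log$ is natural logarithm): let $Z=[(2n+2)(1+\varepsilon^* )+1]\log(\bar\mu/\lambda_{\min})\,|\mathcal V|\sum_i\kappa^{\ell(i)}$, sum over all nodes $i$, $\ell(i)$ the layer of $i$. Initialize $q=1$, $h(1)=1$, $\varepsilon_1=\varepsilon^*$, $T_1=0$. For each arrival/departure of a request $r$: handle $r$ with c-REShare$(\varepsilon_{h(q)})$, using the latency ranges of $\varepsilon_{h(q)}$ (so jobs handled in different intervals never share VMs), and update a simulated SHA$(\varepsilon_{h(q)})$ run on the subsequence $\sigma_q$ of requests handled in the current interval $q$; let $Y_q^r=\tilde\phi(\mathrm{SHA}(\varepsilon_{h(q)}),\sigma_q^r)$ where $\sigma_q^r$ is $\sigma_q$ up to and including $r$. With $C_q=\frac{Z}{\varepsilon_{h(q)}\log(1+\varepsilon_{h(q)})}$ and $S_q=\frac{1}{\varepsilon_{h(q)}}\sum_{p=1}^{h(q)-1}(2+3\varepsilon_{p})\tilde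 Y_p$: if $Y_q^r\ge\max\{C_q,S_q\}$, set $\varepsilon_{h(q)+1}=\varepsilon_{h(q)}/2$, $T_{h(q)+1}=\Lambda$ (the current total system load), $\tilde Y_{h(q)}=Y_q^r$, $h(q+1)=h(q)+1$, $q\gets q+1$; else if $\Lambda<T_{h(q)}$, set $h(q+1)=h(q)-1$ and $q\gets q+1$. With infinite durations no departures occur, so $h(q)=q$. $\phi(\mathrm{REShare},\sigma_h)$ is the cost of the VMs used by REShare for the requests of interval $h$. *)

theory Defs
  imports Complex_Main
begin

text \<open>Abstract network (nodes with their layers), VNFs with complexities, VM maximum
capability, minimum load, forwarding latencies per layer, cost coefficients per layer,
and the REShare parameter eps_star.\<close>

record ('n, 'v) sys =
  s_nodes   :: "'n set"
  s_layer   :: "'n \<Rightarrow> nat"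
  s_vnfs    :: "'v set"
  s_theta   :: "'v \<Rightarrow> real"
  s_mubar   :: real
  s_lmin    :: real
  s_d       :: "nat \<Rightarrow> real"
  s_kf      :: "nat \<Rightarrow> real"
  s_kp      :: "nat \<Rightarrow> real"
  s_epsstar :: real

text \<open>A request: set of VNFs, load, delay target (durations are infinite, hence omitted).\<close>
record 'v req =
  r_V   :: "'v set"
  r_lam :: real
  r_D   :: real

definition Lmax :: "('n, 'v) sys \<Rightarrow> nat" where
  "Lmax S = Max (s_layer S ` s_nodes S)"

definition Mrv :: "('n, 'v) sys \<Rightarrow> 'v req \<Rightarrow> 'v \<Rightarrow> real" where
  "Mrv S r v = 1 / (s_mubar S - s_theta S v * r_lam r)"

definition SumM :: "('n, 'v) sys \<Rightarrow> 'v req \<Rightarrow> real" where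
  "SumM S r = (\<Sum>u\<in>r_V r. Mrv S r u)"

text \<open>Deploying r at layer l is feasible (d_l + sum of minimal processing latencies within D_r).\<close>
definition feas_layer :: "('n, 'v) sys \<Rightarrow> 'v req \<Rightarrow> nat \<Rightarrow> bool" where
  "feas_layer S r l \<longleftrightarrow> s_d S l + SumM S r \<le> r_D r"

definition lstar :: "('n, 'v) sys \<Rightarrow> 'v req \<Rightarrow> nat" where
  "lstar S r = Max {l. l \<le> Lmax S \<and> feas_layer S r l}"

definition Dfair :: "('n, 'v) sys \<Rightarrow> 'v req \<Rightarrow> 'v \<Rightarrow> real" where
  "Dfair S r v = Mrv S r v / SumM S r * (r_D r - s_d S (lstar S r))"

definition in_range :: "('n, 'v) sys \<Rightarrow> real \<Rightarrow> nat \<Rightarrow> real \<Rightarrow> bool" where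
  "in_range S eps j x \<longleftrightarrow>
     (if j = 0 then 1 / (s_mubar S - s_lmin S) \<le> x \<and> x \<le> 1 / (s_mubar S - s_lmin S * (1 + eps))
      else 1 / (s_mubar S - s_lmin S * (1 + eps) ^ j) < x
           \<and> x \<le> 1 / (s_mubar S - s_lmin S * (1 + eps) ^ (j + 1)))"

definition rng_idx :: "('n, 'v) sys \<Rightarrow> real \<Rightarrow> real \<Rightarrow> nat" where
  "rng_idx S eps x = (THE j. in_range S eps j x)"

text \<open>Relaxed delay constraint of top jobs of range j.\<close>
definition Dtop :: "('n, 'v) sys \<Rightarrow> real \<Rightarrow> nat \<Rightarrow> real" where
  "Dtop S eps j = 1 / (s_mubar S - s_lmin S * (1 + eps) ^ (j + 1))"

definition kap :: "('n, 'v) sys \<Rightarrow> nat \<Rightarrow> real" where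
  "kap S l = s_kf S l + s_kp S l * s_mubar S"

definition Zc :: "('n, 'v) sys \<Rightarrow> real" where
  "Zc S = ((2 * real (card (s_nodes S)) + 2) * (1 + s_epsstar S) + 1)
          * ln (s_mubar S / s_lmin S) * real (card (s_vnfs S))
          * (\<Sum>i\<in>s_nodes S. kap S (s_layer S i))"

definition eps :: "('n, 'v) sys \<Rightarrow> nat \<Rightarrow> real" where
  "eps S h = s_epsstar S / 2 ^ (h - 1)"

section \<open>SHA(eps)\<close>

text \<open>A SHA VM: node, VNF, latency range, capability, and the (fractional) load it carries
from each request (requests are identified by their index in the request list).\<close>
record ('n, 'v) svm =
  sv_node :: 'n
  sv_vnf  :: 'v
  sv_rng  :: nat
  sv_cap  :: real
  sv_load :: "nat \<Rightarrow> real"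

type_synonym ('n, 'v) splacement = "(nat \<Rightarrow> 'v \<Rightarrow> 'n) \<times> ('n, 'v) svm list"

definition sv_Lam :: "nat set \<Rightarrow> ('n, 'v) svm \<Rightarrow> real" where
  "sv_Lam I b = (\<Sum>t\<in>I. sv_load b t)"

definition sha_valid ::
  "('n, 'v) sys \<Rightarrow> 'v req list \<Rightarrow> real \<Rightarrow> nat set \<Rightarrow> ('n, 'v) splacement \<Rightarrow> bool" where
  "sha_valid S rs e I P \<longleftrightarrow>
     (let asg = fst P; vms = snd P in
       (\<forall>t\<in>I. \<forall>v\<in>r_V (rs ! t).
           asg t v \<in> s_nodes S \<and> feas_layer S (rs ! t) (s_layer S (asg t v))
           \<and> (\<Sum>b\<leftarrow>vms. if sv_vnf b = v then sv_load b t else 0) = r_lam (rs ! t))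
     \<and> (\<forall>b\<in>set vms.
           sv_node b \<in> s_nodes S \<and> sv_cap b \<le> s_mubar S
           \<and> (\<forall>t. 0 \<le> sv_load b t)
           \<and> (\<forall>t. 0 < sv_load b t \<longrightarrow>
                 t \<in> I \<and> sv_vnf b \<in> r_V (rs ! t) \<and> asg t (sv_vnf b) = sv_node b
                 \<and> rng_idx S e (Dfair S (rs ! t) (sv_vnf b)) = sv_rng b)
           \<and> (0 < sv_Lam I b \<longrightarrow>
                 0 < sv_cap b - s_theta S (sv_vnf b) * sv_Lam I b
                 \<and> 1 / (sv_cap b - s_theta S (sv_vnf b) * sv_Lam I b) \<le> Dtop S e (sv_rng b))))"

definition sha_cost :: "('n, 'v) sys \<Rightarrow> nat set \<Rightarrow> ('n, 'v) splacement \<Rightarrow> real" where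
  "sha_cost S I P = (\<Sum>b\<leftarrow>snd P. if 0 < sv_Lam I b
      then s_kf S (s_layer S (sv_node b)) + s_kp S (s_layer S (sv_node b)) * sv_cap b else 0)"

definition sha_fullcost :: "('n, 'v) sys \<Rightarrow> nat set \<Rightarrow> ('n, 'v) splacement \<Rightarrow> real" where
  "sha_fullcost S I P = (\<Sum>b\<leftarrow>snd P. if 0 < sv_Lam I b \<and> sv_cap b = s_mubar S
      then s_kf S (s_layer S (sv_node b)) + s_kp S (s_layer S (sv_node b)) * sv_cap b else 0)"

definition sha_opt ::
  "('n, 'v) sys \<Rightarrow> 'v req list \<Rightarrow> real \<Rightarrow> nat set \<Rightarrow> ('n, 'v) splacement \<Rightarrow> bool" where
  "sha_opt S rs e I P \<longleftrightarrow> sha_valid S rs e I P \<and>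
     (\<forall>P'. sha_valid S rs e I P' \<longrightarrow> sha_cost S I P \<le> sha_cost S I P')"

definition sha_canonical :: "('n, 'v) sys \<Rightarrow> nat set \<Rightarrow> ('n, 'v) splacement \<Rightarrow> bool" where
  "sha_canonical S I P \<longleftrightarrow>
     (\<forall>a < length (snd P). \<forall>c < length (snd P).
        a \<noteq> c \<and> sv_node (snd P ! a) = sv_node (snd P ! c)
        \<and> sv_vnf (snd P ! a) = sv_vnf (snd P ! c) \<and> sv_rng (snd P ! a) = sv_rng (snd P ! c)
        \<and> 0 < sv_Lam I (snd P ! a) \<and> 0 < sv_Lam I (snd P ! c)
        \<longrightarrow> sv_cap (snd P ! a) = s_mubar S \<or> sv_cap (snd P ! c) = s_mubar S)"

text \<open>phi-tilde(SHA(eps), sigma): full-VM cost of (a fixed) canonical optimal SHA(eps) placement.\<close>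
definition phiSHA :: "('n, 'v) sys \<Rightarrow> 'v req list \<Rightarrow> real \<Rightarrow> nat set \<Rightarrow> real" where
  "phiSHA S rs e I = sha_fullcost S I (SOME P. sha_opt S rs e I P \<and> sha_canonical S I P)"

section \<open>REShare with infinite durations\<close>

text \<open>A REShare VM: node, VNF, latency range, interval in which it was opened, hosted jobs
(request indices).\<close>
record ('n, 'v) rvm =
  rv_node :: 'n
  rv_vnf  :: 'v
  rv_rng  :: nat
  rv_int  :: nat
  rv_jobs :: "nat list"

definition rv_Lam :: "'v req list \<Rightarrow> ('n, 'v) rvm \<Rightarrow> real" where
  "rv_Lam rs b = (\<Sum>t\<leftarrow>rv_jobs b. r_lam (rs ! t))"

definition rv_cap :: "('n, 'v) sys \<Rightarrow> 'v req list \<Rightarrow> ('n, 'v) rvm \<Rightarrow> real" where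
  "rv_cap S rs b = s_theta S (rv_vnf b) * rv_Lam rs b
     + 1 / Min ((\<lambda>t. Dfair S (rs ! t) (rv_vnf b)) ` set (rv_jobs b))"

definition rv_cost :: "('n, 'v) sys \<Rightarrow> 'v req list \<Rightarrow> ('n, 'v) rvm \<Rightarrow> real" where
  "rv_cost S rs b = s_kf S (s_layer S (rv_node b)) + s_kp S (s_layer S (rv_node b)) * rv_cap S rs b"

definition viable ::
  "('n, 'v) sys \<Rightarrow> 'v req list \<Rightarrow> nat \<Rightarrow> real \<Rightarrow> nat \<Rightarrow> 'n \<Rightarrow> 'v \<Rightarrow> ('n, 'v) rvm \<Rightarrow> bool" where
  "viable S rs q e t i v b \<longleftrightarrow>
     (let r = rs ! t; x = s_mubar S - s_theta S v * (rv_Lam rs b + r_lam r) in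
       rv_node b = i \<and> rv_vnf b = v \<and> rv_int b = q
       \<and> rv_rng b = rng_idx S e (Dfair S r v)
       \<and> 0 < x \<and> 1 / x \<le> Dfair S r v
       \<and> (\<forall>t'\<in>set (rv_jobs b). 1 / x \<le> Dfair S (rs ! t') v))"

definition place1 ::
  "('n, 'v) sys \<Rightarrow> 'v req list \<Rightarrow> nat \<Rightarrow> real \<Rightarrow> nat \<Rightarrow> 'n \<Rightarrow> 'v
    \<Rightarrow> ('n, 'v) rvm list \<Rightarrow> ('n, 'v) rvm list \<Rightarrow> bool" where
  "place1 S rs q e t i v vms vms' \<longleftrightarrow>
     (\<exists>k < length vms. viable S rs q e t i v (vms ! k)
        \<and> (\<forall>k' < length vms. viable S rs q e t i v (vms ! k') \<longrightarrow>
              rv_Lam rs (vms ! k') \<le> rv_Lam rs (vms ! k))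
        \<and> vms' = vms[k := (vms ! k)\<lparr>rv_jobs := rv_jobs (vms ! k) @ [t]\<rparr>])
   \<or> ((\<forall>k < length vms. \<not> viable S rs q e t i v (vms ! k))
        \<and> vms' = vms @ [\<lparr>rv_node = i, rv_vnf = v, rv_rng = rng_idx S e (Dfair S (rs ! t) v),
                         rv_int = q, rv_jobs = [t]\<rparr>])"

inductive place_all ::
  "('n, 'v) sys \<Rightarrow> 'v req list \<Rightarrow> nat \<Rightarrow> real \<Rightarrow> nat \<Rightarrow> 'n \<Rightarrow> 'v list
    \<Rightarrow> ('n, 'v) rvm list \<Rightarrow> ('n, 'v) rvm list \<Rightarrow> bool"
  for S rs q e t i where
  "place_all S rs q e t i [] vms vms"
| "place1 S rs q e t i v vms vms1 \<Longrightarrow> place_all S rs q e t i vs vms1 vms2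
     \<Longrightarrow> place_all S rs q e t i (v # vs) vms vms2"

text \<open>State: VMs, interval index of each handled request, and the recorded values
Y-tilde_1, ..., Y-tilde_{q-1}; the current interval is q = length st_Y + 1.\<close>
record ('n, 'v) rstate =
  st_vms :: "('n, 'v) rvm list"
  st_ivl :: "nat list"
  st_Y   :: "real list"

definition sigma_set :: "nat list \<Rightarrow> nat \<Rightarrow> nat set" where
  "sigma_set ivl h = {t. t < length ivl \<and> ivl ! t = h}"

definition Cq :: "('n, 'v) sys \<Rightarrow> nat \<Rightarrow> real" where
  "Cq S q = Zc S / (eps S q * ln (1 + eps S q))"

definition Sq :: "('n, 'v) sys \<Rightarrow> real list \<Rightarrow> nat \<Rightarrow> real" where
  "Sq S Ys q = 1 / eps S q * (\<Sum>p = 1..q - 1. (2 + 3 * eps S p) * Ys ! (p - 1))"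

definition step ::
  "('n, 'v) sys \<Rightarrow> 'v req list \<Rightarrow> ('n, 'v) rstate \<Rightarrow> ('n, 'v) rstate \<Rightarrow> bool" where
  "step S rs st st' \<longleftrightarrow>
     (let t = length (st_ivl st); r = rs ! t; q = length (st_Y st) + 1; e = eps S q;
          ivl' = st_ivl st @ [q]; Y = phiSHA S rs e (sigma_set ivl' q) in
       t < length rs
       \<and> (\<exists>i vs. i \<in> s_nodes S \<and> s_layer S i = lstar S r \<and> distinct vs \<and> set vs = r_V r
              \<and> place_all S rs q e t i vs (st_vms st) (st_vms st'))
       \<and> st_ivl st' = ivl'
       \<and> st_Y st' = (if max (Cq S q) (Sq S (st_Y st) q) \<le> Y then st_Y st @ [Y] else st_Y st))"

inductive reach :: "('n, 'v) sys \<Rightarrow> 'v req list \<Rightarrow> ('n, 'v) rstate \<Rightarrow> bool" for S rs where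
  "reach S rs \<lparr>st_vms = [], st_ivl = [], st_Y = []\<rparr>"
| "reach S rs st \<Longrightarrow> step S rs st st' \<Longrightarrow> reach S rs st'"

definition phiRES :: "('n, 'v) sys \<Rightarrow> 'v req list \<Rightarrow> ('n, 'v) rstate \<Rightarrow> nat \<Rightarrow> real" where
  "phiRES S rs st h = (\<Sum>b\<leftarrow>st_vms st. if rv_int b = h then rv_cost S rs b else 0)"

definition wf_sys :: "('n, 'v) sys \<Rightarrow> bool" where
  "wf_sys S \<longleftrightarrow>
     finite (s_nodes S) \<and> s_nodes S \<noteq> {}
     \<and> (\<forall>l \<le> Lmax S. \<exists>i\<in>s_nodes S. s_layer S i = l)
     \<and> finite (s_vnfs S) \<and> (\<forall>v\<in>s_vnfs S. 0 < s_theta S v \<and> s_theta S v \<le> 1)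
     \<and> 0 < s_mubar S \<and> 0 < s_lmin S
     \<and> (\<forall>l l'. l < l' \<and> l' \<le> Lmax S \<longrightarrow> s_d S l < s_d S l')
     \<and> (\<forall>l l'. l < l' \<and> l' \<le> Lmax S \<longrightarrow> s_kf S l' < s_kf S l \<and> s_kp S l' < s_kp S l)
     \<and> (\<forall>l \<le> Lmax S. 0 < s_kf S l \<and> 0 < s_kp S l)
     \<and> 0 < s_epsstar S"

definition wf_req :: "('n, 'v) sys \<Rightarrow> 'v req \<Rightarrow> bool" where
  "wf_req S r \<longleftrightarrow>
     r_V r \<subseteq> s_vnfs S \<and> s_lmin S \<le> r_lam r
     \<and> (\<forall>v\<in>r_V r. s_theta S v * r_lam r < s_mubar S)
     \<and> feas_layer S r 0
     \<and> (\<forall>v\<in>r_V r. \<forall>h\<ge>1. \<exists>j. in_range S (eps S h) j (Dfair S r v))"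

end

theory Submission
  imports Defs "HOL-Library.FuncSet"
begin

text \<open>Every job gets the weight \<open>kappa * theta * lambda / c\<^sub>j\<close>: its share of a full VM of its
  latency range \<open>j\<close> (which carries \<open>theta * Lambda \<le> c\<^sub>j\<close>) at the cheapest layer it may use.
  In SHA every used VM is charged at most its cost at full capability, and canonicity leaves
  at most one partially filled VM per slot (node, VNF, range); so the weights of interval
  \<open>h\<close> sum to at most \<open>Y\<^sub>h + G\<close>, where \<open>Y\<^sub>h\<close> is the full-VM cost of SHA and \<open>G\<close> the cost
  of one full VM per slot. In REShare a VM costs at most \<open>kappa\<close>; unless it is light, this
  is at most \<open>2 (1 + eps)\<close> times the weights of its jobs, the factor \<open>1 + eps\<close> being the
  width of a range; and REShare never keeps two light VMs in one slot, since the job that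
  opened the second one would have been viable for the first. Hence
  \<open>phi\<^sub>h \<le> G + 2 (1 + eps) (Y\<^sub>h + G) \<le> (2 + 3 eps\<^sub>h) Y\<^sub>h\<close>, because the threshold \<open>C\<^sub>h\<close> that
  closed the interval absorbs \<open>(3 + 2 eps) G\<close>. Closing interval \<open>k\<close> also required
  \<open>Y\<^sub>k \<ge> S\<^sub>k\<close>, so all earlier intervals together add at most \<open>eps\<^sub>k Y\<^sub>k\<close>.

  The canonical optimal SHA placement behind \<open>Y\<^sub>h\<close> exists because, for each of the finitely
  many assignments of jobs to nodes, filling the VMs of every slot one after another attains
  a lower bound on the cost of all placements with that assignment.\<close>

section \<open>Latency ranges\<close>

text \<open>A VM of range \<open>j\<close> running at full capability meets the relaxed delay constraint
  \<^term>\<open>Dtop S e j\<close> exactly while \<open>theta * Lambda \<le> range_load S e j\<close>.\<close>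
definition range_load :: "('n, 'v) sys \<Rightarrow> real \<Rightarrow> nat \<Rightarrow> real" where
  "range_load S e j = s_lmin S * (1 + e) ^ (j + 1)"

lemma Dtop_eq: "Dtop S e j = 1 / (s_mubar S - range_load S e j)"
  unfolding Dtop_def range_load_def by simp

lemma range_load_pos: "0 < s_lmin S \<Longrightarrow> 0 < e \<Longrightarrow> 0 < range_load S e j"
  unfolding range_load_def by simp

lemma range_load_le_next:
  "0 < s_lmin S \<Longrightarrow> 0 < e \<Longrightarrow> j < j' \<Longrightarrow> range_load S e j \<le> s_lmin S * (1 + e) ^ j'"
  unfolding range_load_def by (intro mult_left_mono power_increasing) auto

lemma in_range_bounds:
  assumes lmin: "0 < s_lmin S" and e: "0 < e" and D: "0 < D" and j: "in_range S e j D"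
  shows in_range_headroom: "range_load S e j < s_mubar S"
    and in_range_lower: "s_lmin S * (1 + e) ^ j \<le> s_mubar S - 1 / D"
    and in_range_lower_strict: "0 < j \<Longrightarrow> s_lmin S * (1 + e) ^ j < s_mubar S - 1 / D"
    and in_range_upper: "s_mubar S - 1 / D \<le> range_load S e j"
proof -
  have up: "D \<le> 1 / (s_mubar S - range_load S e j)"
    using j by (auto simp: in_range_def range_load_def split: if_splits)
  with D have "0 < 1 / (s_mubar S - range_load S e j)" by linarith
  then show headroom: "range_load S e j < s_mubar S" by (simp add: zero_less_divide_1_iff)
  with up D show "s_mubar S - 1 / D \<le> range_load S e j"
    by (simp add: field_simps)
  have "s_lmin S * (1 + e) ^ j \<le> range_load S e j"
    unfolding range_load_def using lmin e by (simp add: power_increasing)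
  with headroom have pos: "0 < s_mubar S - s_lmin S * (1 + e) ^ j" by linarith
  show strict: "s_lmin S * (1 + e) ^ j < s_mubar S - 1 / D" if "0 < j"
  proof -
    have "1 / (s_mubar S - s_lmin S * (1 + e) ^ j) < D" using j that by (simp add: in_range_def)
    with pos D show ?thesis by (simp add: field_simps)
  qed
  show "s_lmin S * (1 + e) ^ j \<le> s_mubar S - 1 / D"
  proof (cases "j = 0")
    case True
    then have "1 / (s_mubar S - s_lmin S) \<le> D" using j by (simp add: in_range_def)
    with pos D True show ?thesis by (simp add: field_simps)
  qed (use strict in auto)
qed

lemma in_range_unique:
  assumes lmin: "0 < s_lmin S" and e: "0 < e" and D: "0 < D"
    and j: "in_range S e j D" and j': "in_range S e j' D"
  shows "j = j'"
proof -
  have False if "in_range S e a D" "in_range S e b D" "a < b" for a b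
    using in_range_upper[OF lmin e D that(1)] in_range_lower_strict[OF lmin e D that(2)]
      range_load_le_next[OF lmin e that(3)] that(3) by linarith
  then show ?thesis using j j' by (cases j j' rule: linorder_cases) auto
qed

lemma rng_idx_eq:
  assumes "0 < s_lmin S" "0 < e" "0 < D" "in_range S e j D"
  shows "rng_idx S e D = j"
  unfolding rng_idx_def using assms in_range_unique by blast

definition ranges :: "('n, 'v) sys \<Rightarrow> real \<Rightarrow> nat set" where
  "ranges S e = {j. range_load S e j < s_mubar S}"

lemma finite_ranges:
  assumes lmin: "0 < s_lmin S" and e: "0 < e"
  shows "finite (ranges S e)"
proof -
  define N where "N = nat \<lceil>s_mubar S / (s_lmin S * e)\<rceil>"
  have "ranges S e \<subseteq> {..N}"
  proof
    fix j assume j: "j \<in> ranges S e"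
    have "s_lmin S * (1 + real (j + 1) * e) \<le> range_load S e j"
      unfolding range_load_def using Bernoulli_inequality[of e "j + 1"] lmin e by simp
    moreover have "0 < s_lmin S * e" using lmin e by simp
    ultimately have "s_lmin S * (real j * e) < s_mubar S"
      using j lmin unfolding ranges_def by (simp add: algebra_simps)
    then have "real j < s_mubar S / (s_lmin S * e)" using lmin e by (simp add: field_simps)
    also have "\<dots> \<le> real N" unfolding N_def by (rule real_nat_ceiling_ge)
    finally show "j \<in> {..N}" by simp
  qed
  then show ?thesis using finite_subset by blast
qed

lemma card_ranges_le:
  assumes lmin: "0 < s_lmin S" and e: "0 < e" and ne: "ranges S e \<noteq> {}"
  shows "real (card (ranges S e)) \<le> ln (s_mubar S / s_lmin S) / ln (1 + e)"
proof -
  define m where "m = Max (ranges S e)"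
  have fin: "finite (ranges S e)" using finite_ranges[OF lmin e] .
  then have "card (ranges S e) \<le> card {..m}"
    unfolding m_def by (intro card_mono) auto
  then have card: "card (ranges S e) \<le> m + 1" by simp
  have "range_load S e m < s_mubar S"
    using Max_in[OF fin ne] unfolding m_def ranges_def by simp
  moreover have "0 < range_load S e m" using range_load_pos[OF lmin e] .
  ultimately have "ln (range_load S e m) < ln (s_mubar S)" and "0 < s_mubar S" by simp_all
  moreover have "ln (range_load S e m) = ln (s_lmin S) + real (m + 1) * ln (1 + e)"
    unfolding range_load_def using lmin e by (simp only: ln_mult ln_realpow zero_less_power) simp
  ultimately have "real (m + 1) * ln (1 + e) < ln (s_mubar S / s_lmin S)"
    using lmin by (simp add: ln_div)
  then have "real (m + 1) < ln (s_mubar S / s_lmin S) / ln (1 + e)"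
    using e by (simp add: field_simps)
  with card show ?thesis by (smt (verit) of_nat_mono)
qed

lemma sum_list_map_eq_sum_nth: "(\<Sum>x\<leftarrow>xs. f x) = (\<Sum>a<length xs. f (xs ! a))"
  by (simp add: sum_list_sum_nth atLeast0LessThan)

lemma sum_inj_image_le:
  fixes g :: "'b \<Rightarrow> real"
  assumes "finite T" "inj_on lab A" "lab ` A \<subseteq> T" "\<And>x. x \<in> T \<Longrightarrow> 0 \<le> g x"
  shows "(\<Sum>a\<in>A. g (lab a)) \<le> (\<Sum>x\<in>T. g x)"
proof -
  have "(\<Sum>a\<in>A. g (lab a)) = (\<Sum>x\<in>lab ` A. g x)" using sum.reindex[OF assms(2), of g] by (simp add: o_def)
  also have "\<dots> \<le> (\<Sum>x\<in>T. g x)" using assms by (intro sum_mono2) auto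
  finally show ?thesis .
qed

lemma sum_sum_list_swap: "(\<Sum>t\<in>I. \<Sum>x\<leftarrow>xs. f t x) = (\<Sum>x\<leftarrow>xs. \<Sum>t\<in>I. f t x)"
  by (induction xs) (simp_all add: sum.distrib)

lemma nat_ceiling_bounds:
  fixes d :: real assumes "0 < d"
  shows "1 \<le> nat \<lceil>d\<rceil>" "d \<le> real (nat \<lceil>d\<rceil>)" "real (nat \<lceil>d\<rceil>) - 1 < d"
  using assms by (auto simp: real_nat_ceiling_ge) linarith+

lemma sum_list_concat: "sum_list (concat xss) = sum_list (map sum_list xss)"
  by (induction xss) auto

lemma sum_list_list_update:
  fixes xs :: "'a::ab_group_add list"
  shows "k < length xs \<Longrightarrow> sum_list (xs[k := x]) = sum_list xs + x - xs ! k"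
proof (induction xs arbitrary: k)
  case (Cons y xs)
  then show ?case by (cases k) auto
qed simp

locale reshare_instance =
  fixes S :: "('n, 'v) sys" and rs :: "'v req list"
  assumes wf_sys: "wf_sys S" and wf_reqs: "\<forall>r\<in>set rs. wf_req S r"
begin

lemma wf_req_nth: "t < length rs \<Longrightarrow> wf_req S (rs ! t)"
  using wf_reqs by simp

lemma lmin_pos: "0 < s_lmin S" and mubar_pos: "0 < s_mubar S"
  and finite_nodes: "finite (s_nodes S)" and finite_vnfs: "finite (s_vnfs S)"
  and epsstar_pos: "0 < s_epsstar S"
  using wf_sys by (auto simp: wf_sys_def)

lemma layer_le_Lmax: "i \<in> s_nodes S \<Longrightarrow> s_layer S i \<le> Lmax S"
  using wf_sys unfolding Lmax_def wf_sys_def by auto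

lemma node_costs_pos:
  assumes "i \<in> s_nodes S"
  shows "0 < s_kf S (s_layer S i)" "0 < s_kp S (s_layer S i)" "0 < kap S (s_layer S i)"
  using wf_sys layer_le_Lmax[OF assms] mubar_pos
  unfolding wf_sys_def kap_def by (auto intro!: add_pos_pos)

lemma kap_antimono:
  assumes "l \<le> l'" "l' \<le> Lmax S"
  shows "kap S l' \<le> kap S l"
proof (cases "l = l'")
  case False
  with assms wf_sys have "s_kf S l' < s_kf S l" "s_kp S l' < s_kp S l"
    unfolding wf_sys_def by auto
  with mubar_pos show ?thesis unfolding kap_def by (smt (verit) mult_right_mono)
qed simp

lemma theta_pos: "wf_req S r \<Longrightarrow> v \<in> r_V r \<Longrightarrow> 0 < s_theta S v"
  using wf_sys unfolding wf_sys_def wf_req_def by auto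

lemma req_vnf_sub: "wf_req S r \<Longrightarrow> v \<in> r_V r \<Longrightarrow> v \<in> s_vnfs S"
  unfolding wf_req_def by auto

lemma lam_pos: "wf_req S r \<Longrightarrow> 0 < r_lam r"
  using lmin_pos unfolding wf_req_def by auto

lemma finite_req_vnfs: "wf_req S r \<Longrightarrow> finite (r_V r)"
  using finite_vnfs unfolding wf_req_def by (auto intro: finite_subset)

lemma eps_pos: "0 < eps S h"
  using epsstar_pos unfolding eps_def by simp

lemma eps_le_epsstar: "1 \<le> h \<Longrightarrow> eps S h \<le> s_epsstar S"
  using epsstar_pos unfolding eps_def by (simp add: divide_simps)

lemma lstar_feasible: "wf_req S r \<Longrightarrow> feas_layer S r (lstar S r)"
  and lstar_le_Lmax: "wf_req S r \<Longrightarrow> lstar S r \<le> Lmax S"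
  and le_lstar: "wf_req S r \<Longrightarrow> l \<le> Lmax S \<Longrightarrow> feas_layer S r l \<Longrightarrow> l \<le> lstar S r"
proof -
  let ?A = "{l. l \<le> Lmax S \<and> feas_layer S r l}"
  have fin: "finite ?A" by (rule finite_subset[of _ "{..Lmax S}"]) auto
  assume "wf_req S r"
  then have "0 \<in> ?A" by (simp add: wf_req_def)
  then have "lstar S r \<in> ?A" unfolding lstar_def using fin Max_in by blast
  then show "feas_layer S r (lstar S r)" "lstar S r \<le> Lmax S" by auto
  show "l \<le> Lmax S \<Longrightarrow> feas_layer S r l \<Longrightarrow> l \<le> lstar S r"
    unfolding lstar_def using fin by (simp add: Max_ge)
qed

text \<open>Since the fair allocation splits at least the minimal latencies among the VNFs,
  each job alone fits into a VM with its delay budget.\<close>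
lemma Dfair_pos: "wf_req S r \<Longrightarrow> v \<in> r_V r \<Longrightarrow> 0 < Dfair S r v"
  and Dfair_fits: "wf_req S r \<Longrightarrow> v \<in> r_V r \<Longrightarrow> s_theta S v * r_lam r + 1 / Dfair S r v \<le> s_mubar S"
proof -
  assume r: "wf_req S r" and v: "v \<in> r_V r"
  have below: "s_theta S v * r_lam r < s_mubar S" using r v by (simp add: wf_req_def)
  have M: "0 < Mrv S r u" if "u \<in> r_V r" for u
    using r that unfolding Mrv_def wf_req_def by auto
  have "Mrv S r v \<le> SumM S r"
    unfolding SumM_def using M v finite_req_vnfs[OF r] by (intro member_le_sum) (auto intro: less_imp_le)
  moreover have "s_d S (lstar S r) + SumM S r \<le> r_D r"
    using lstar_feasible[OF r] by (simp add: feas_layer_def)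
  ultimately have "1 \<le> (r_D r - s_d S (lstar S r)) / SumM S r"
    using M[OF v] by (simp add: field_simps)
  then have "Mrv S r v * 1 \<le> Mrv S r v * ((r_D r - s_d S (lstar S r)) / SumM S r)"
    using M[OF v] by (intro mult_left_mono) auto
  then have "Mrv S r v \<le> Dfair S r v" unfolding Dfair_def by simp
  then show "0 < Dfair S r v" using M[OF v] by linarith
  have "1 / Dfair S r v \<le> 1 / Mrv S r v"
    using \<open>Mrv S r v \<le> Dfair S r v\<close> M[OF v] by (simp add: frac_le)
  with below show "s_theta S v * r_lam r + 1 / Dfair S r v \<le> s_mubar S"
    unfolding Mrv_def by simp
qed

definition range_of :: "real \<Rightarrow> nat \<Rightarrow> 'v \<Rightarrow> nat" where
  "range_of e t v = rng_idx S e (Dfair S (rs ! t) v)"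

lemma in_range_of:
  assumes "t < length rs" "v \<in> r_V (rs ! t)" "1 \<le> h"
  shows "in_range S (eps S h) (range_of (eps S h) t v) (Dfair S (rs ! t) v)"
proof -
  have r: "wf_req S (rs ! t)" using wf_req_nth assms(1) .
  then obtain j where "in_range S (eps S h) j (Dfair S (rs ! t) v)"
    using assms unfolding wf_req_def by blast
  with rng_idx_eq[OF lmin_pos eps_pos Dfair_pos[OF r assms(2)]] show ?thesis
    unfolding range_of_def by simp
qed

lemma range_of_headroom:
  assumes "t < length rs" "v \<in> r_V (rs ! t)" "1 \<le> h"
  shows "range_load S (eps S h) (range_of (eps S h) t v) < s_mubar S"
  using in_range_headroom[OF lmin_pos eps_pos Dfair_pos in_range_of[OF assms]]
    wf_req_nth assms by blast

definition job_weight :: "real \<Rightarrow> nat \<Rightarrow> 'v \<Rightarrow> real" where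
  "job_weight e t v =
     kap S (lstar S (rs ! t)) * s_theta S v * r_lam (rs ! t) / range_load S e (range_of e t v)"

definition slot_cost :: "real \<Rightarrow> real" where
  "slot_cost e = (\<Sum>(i, v, j) \<in> s_nodes S \<times> s_vnfs S \<times> ranges S e. kap S (s_layer S i))"

lemma slot_cost_eq:
  "slot_cost e = real (card (s_vnfs S)) * real (card (ranges S e)) * (\<Sum>i\<in>s_nodes S. kap S (s_layer S i))"
  unfolding slot_cost_def
  by (simp add: sum.cartesian_product[symmetric] sum_distrib_left card_cartesian_product mult_ac)

lemma slot_cost_nonneg: "0 \<le> slot_cost e"
  unfolding slot_cost_def using node_costs_pos by (intro sum_nonneg) (auto intro: less_imp_le)

lemma slot_cost_le_threshold:
  assumes h: "1 \<le> h" and Y: "Cq S h \<le> Y" "0 \<le> Y"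
  shows "(3 + 2 * eps S h) * slot_cost (eps S h) \<le> eps S h * Y"
proof (cases "ranges S (eps S h) = {}")
  case True
  then show ?thesis using eps_pos[of h] Y by (simp add: slot_cost_eq)
next
  case False
  define e where "e = eps S h"
  define X where "X = ln (s_mubar S / s_lmin S) / ln (1 + e)"
  define K where "K = (\<Sum>i\<in>s_nodes S. kap S (s_layer S i))"
  define V where "V = real (card (s_vnfs S))"
  define n where "n = real (card (s_nodes S))"
  have e: "0 < e" unfolding e_def by (rule eps_pos)
  have K: "0 \<le> K" unfolding K_def using node_costs_pos by (intro sum_nonneg) (auto intro: less_imp_le)
  have card: "real (card (ranges S e)) \<le> X"
    unfolding X_def e_def using card_ranges_le[OF lmin_pos eps_pos False] .
  have "1 \<le> n" using wf_sys unfolding n_def wf_sys_def by (simp add: Suc_le_eq card_gt_0_iff)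
  then have "4 * (1 + s_epsstar S) \<le> (2 * n + 2) * (1 + s_epsstar S)"
    using epsstar_pos by (intro mult_right_mono) auto
  then have coef: "3 + 2 * e \<le> (2 * n + 2) * (1 + s_epsstar S) + 1"
    using eps_le_epsstar[OF h] e unfolding e_def by argo
  moreover have bound: "slot_cost e \<le> V * X * K"
    unfolding slot_cost_eq V_def K_def[symmetric] using card K by (intro mult_right_mono mult_left_mono) auto
  ultimately have "(3 + 2 * e) * slot_cost e \<le> ((2 * n + 2) * (1 + s_epsstar S) + 1) * (V * X * K)"
    using e slot_cost_nonneg by (intro mult_mono) auto
  also have "\<dots> = e * Cq S h"
    unfolding Cq_def Zc_def X_def V_def K_def n_def e_def[symmetric] using e by (simp add: field_simps)
  also have "\<dots> \<le> e * Y" using Y e by simp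
  finally show ?thesis unfolding e_def .
qed

end

section \<open>Charging the job weights to SHA\<close>

lemma sha_validD:
  assumes "sha_valid S rs e I (asg, vms)"
  shows sha_valid_assignment:
      "t \<in> I \<Longrightarrow> v \<in> r_V (rs ! t) \<Longrightarrow>
         asg t v \<in> s_nodes S \<and> feas_layer S (rs ! t) (s_layer S (asg t v))"
    and sha_valid_split:
      "t \<in> I \<Longrightarrow> v \<in> r_V (rs ! t) \<Longrightarrow>
         (\<Sum>b\<leftarrow>vms. if sv_vnf b = v then sv_load b t else 0) = r_lam (rs ! t)"
    and sha_valid_node: "b \<in> set vms \<Longrightarrow> sv_node b \<in> s_nodes S"
    and sha_valid_cap: "b \<in> set vms \<Longrightarrow> sv_cap b \<le> s_mubar S"
    and sha_valid_load_nonneg: "b \<in> set vms \<Longrightarrow> 0 \<le> sv_load b t"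
    and sha_valid_load_pos:
      "b \<in> set vms \<Longrightarrow> 0 < sv_load b t \<Longrightarrow>
         t \<in> I \<and> sv_vnf b \<in> r_V (rs ! t) \<and> asg t (sv_vnf b) = sv_node b
         \<and> rng_idx S e (Dfair S (rs ! t) (sv_vnf b)) = sv_rng b"
    and sha_valid_latency:
      "b \<in> set vms \<Longrightarrow> 0 < sv_Lam I b \<Longrightarrow>
         0 < sv_cap b - s_theta S (sv_vnf b) * sv_Lam I b
         \<and> 1 / (sv_cap b - s_theta S (sv_vnf b) * sv_Lam I b) \<le> Dtop S e (sv_rng b)"
  using assms unfolding sha_valid_def Let_def by auto

lemma sha_validI:
  assumes "\<And>t v. t \<in> I \<Longrightarrow> v \<in> r_V (rs ! t) \<Longrightarrow>
         asg t v \<in> s_nodes S \<and> feas_layer S (rs ! t) (s_layer S (asg t v))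
         \<and> (\<Sum>b\<leftarrow>vms. if sv_vnf b = v then sv_load b t else 0) = r_lam (rs ! t)"
    and "\<And>b. b \<in> set vms \<Longrightarrow> sv_node b \<in> s_nodes S \<and> sv_cap b \<le> s_mubar S \<and> (\<forall>t. 0 \<le> sv_load b t)"
    and "\<And>b t. b \<in> set vms \<Longrightarrow> 0 < sv_load b t \<Longrightarrow>
         t \<in> I \<and> sv_vnf b \<in> r_V (rs ! t) \<and> asg t (sv_vnf b) = sv_node b
         \<and> rng_idx S e (Dfair S (rs ! t) (sv_vnf b)) = sv_rng b"
    and "\<And>b. b \<in> set vms \<Longrightarrow> 0 < sv_Lam I b \<Longrightarrow>
         0 < sv_cap b - s_theta S (sv_vnf b) * sv_Lam I b
         \<and> 1 / (sv_cap b - s_theta S (sv_vnf b) * sv_Lam I b) \<le> Dtop S e (sv_rng b)"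
  shows "sha_valid S rs e I (asg, vms)"
  using assms unfolding sha_valid_def Let_def by auto

lemma sha_valid_capacity:
  assumes valid: "sha_valid S rs e I (asg, vms)" and b: "b \<in> set vms" and used: "0 < sv_Lam I b"
  shows sha_valid_headroom: "range_load S e (sv_rng b) < s_mubar S"
    and sha_valid_cap_lower:
      "s_theta S (sv_vnf b) * sv_Lam I b + (s_mubar S - range_load S e (sv_rng b)) \<le> sv_cap b"
    and sha_valid_load_le: "s_theta S (sv_vnf b) * sv_Lam I b \<le> range_load S e (sv_rng b)"
proof -
  define slack where "slack = sv_cap b - s_theta S (sv_vnf b) * sv_Lam I b"
  have slack: "0 < slack" "1 / slack \<le> 1 / (s_mubar S - range_load S e (sv_rng b))"
    using sha_valid_latency[OF valid b used] unfolding slack_def Dtop_eq by auto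
  then have "0 < 1 / (s_mubar S - range_load S e (sv_rng b))"
    by (smt (verit) zero_less_divide_1_iff)
  then show headroom: "range_load S e (sv_rng b) < s_mubar S" by (simp add: zero_less_divide_1_iff)
  with slack have "s_mubar S - range_load S e (sv_rng b) \<le> slack"
    by (simp add: divide_simps)
  then show "s_theta S (sv_vnf b) * sv_Lam I b + (s_mubar S - range_load S e (sv_rng b)) \<le> sv_cap b"
    unfolding slack_def by simp
  with sha_valid_cap[OF valid b]
  show "s_theta S (sv_vnf b) * sv_Lam I b \<le> range_load S e (sv_rng b)" by simp
qed

lemma sha_fullcost_eq:
  "sha_fullcost S I (asg, vms)
     = (\<Sum>b\<leftarrow>vms. if 0 < sv_Lam I b \<and> sv_cap b = s_mubar S then kap S (s_layer S (sv_node b)) else 0)"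
  unfolding sha_fullcost_def kap_def by (simp cong: if_cong)

type_synonym ('n, 'v) slot = "'n \<times> 'v \<times> nat"

definition sv_slot :: "('n, 'v) svm \<Rightarrow> ('n, 'v) slot" where
  "sv_slot b = (sv_node b, sv_vnf b, sv_rng b)"

locale sha_instance = reshare_instance S rs for S :: "('n, 'v) sys" and rs +
  fixes h :: nat and I :: "nat set"
  assumes h_pos: "1 \<le> h" and I_sub: "I \<subseteq> {..<length rs}"
begin

abbreviation \<epsilon> :: real where "\<epsilon> \<equiv> eps S h"

lemma finite_I: "finite I"
  using I_sub finite_subset by blast

lemma wf_req_I: "t \<in> I \<Longrightarrow> wf_req S (rs ! t)"
  using I_sub wf_req_nth by blast

lemma range_of_I: "t \<in> I \<Longrightarrow> v \<in> r_V (rs ! t) \<Longrightarrow> range_of \<epsilon> t v \<in> ranges S \<epsilon>"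
  using range_of_headroom I_sub h_pos unfolding ranges_def by blast

text \<open>A job's weight is charged to the SHA VMs carrying its load. Since a VM of range \<open>j\<close>
  carries at most \<^term>\<open>range_load S \<epsilon> j\<close>, a used VM is charged at most its cost at
  full capability.\<close>
definition load_share :: "('n, 'v) svm \<Rightarrow> nat \<Rightarrow> real" where
  "load_share b t = kap S (s_layer S (sv_node b)) * s_theta S (sv_vnf b) * sv_load b t
     / range_load S \<epsilon> (sv_rng b)"

context
  fixes asg vms assumes valid: "sha_valid S rs \<epsilon> I (asg, vms)"
begin

lemma job_weight_le_load_shares:
  assumes t: "t \<in> I" and v: "v \<in> r_V (rs ! t)"
  shows "job_weight \<epsilon> t v \<le> (\<Sum>b\<leftarrow>vms. if sv_vnf b = v then load_share b t else 0)"
proof -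
  define K where "K = kap S (lstar S (rs ! t)) * s_theta S v / range_load S \<epsilon> (range_of \<epsilon> t v)"
  have "job_weight \<epsilon> t v = K * (\<Sum>b\<leftarrow>vms. if sv_vnf b = v then sv_load b t else 0)"
    unfolding sha_valid_split[OF valid t v] K_def job_weight_def by simp
  also have "\<dots> = (\<Sum>b\<leftarrow>vms. if sv_vnf b = v then K * sv_load b t else 0)"
    by (simp add: sum_list_const_mult[symmetric] if_distrib cong: if_cong)
  also have "\<dots> \<le> (\<Sum>b\<leftarrow>vms. if sv_vnf b = v then load_share b t else 0)"
  proof (intro sum_list_mono)
    fix b assume b: "b \<in> set vms"
    show "(if sv_vnf b = v then K * sv_load b t else 0) \<le> (if sv_vnf b = v then load_share b t else 0)"
    proof (cases "sv_vnf b = v \<and> 0 < sv_load b t")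
      case True
      then have at: "asg t v = sv_node b" "range_of \<epsilon> t v = sv_rng b"
        using sha_valid_load_pos[OF valid b] unfolding range_of_def by auto
      have "s_layer S (asg t v) \<le> lstar S (rs ! t)"
        using sha_valid_assignment[OF valid t v] le_lstar[OF wf_req_I[OF t]] layer_le_Lmax by blast
      then have "kap S (lstar S (rs ! t)) \<le> kap S (s_layer S (sv_node b))"
        using at kap_antimono lstar_le_Lmax[OF wf_req_I[OF t]] by metis
      then have "K * sv_load b t \<le> load_share b t"
        unfolding K_def load_share_def at(2)[symmetric] using True theta_pos[OF wf_req_I[OF t] v]
          range_load_pos[OF lmin_pos eps_pos]
        by (simp add: divide_right_mono mult_right_mono less_imp_le)
      then show ?thesis using True by simp
    next
      case False
      then show ?thesis using sha_valid_load_nonneg[OF valid b, of t] by (auto simp: load_share_def)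
    qed
  qed
  finally show ?thesis .
qed

lemma load_shares_le_used:
  assumes b: "b \<in> set vms"
  shows "(\<Sum>t\<in>I. load_share b t) \<le> (if 0 < sv_Lam I b then kap S (s_layer S (sv_node b)) else 0)"
proof -
  have sum: "(\<Sum>t\<in>I. load_share b t) = kap S (s_layer S (sv_node b))
      * (s_theta S (sv_vnf b) * sv_Lam I b / range_load S \<epsilon> (sv_rng b))"
    unfolding load_share_def sv_Lam_def by (simp add: sum_distrib_left sum_divide_distrib mult_ac)
  show ?thesis
  proof (cases "0 < sv_Lam I b")
    case True
    then have "s_theta S (sv_vnf b) * sv_Lam I b / range_load S \<epsilon> (sv_rng b) \<le> 1"
      using sha_valid_load_le[OF valid b] range_load_pos[OF lmin_pos eps_pos] by simp
    then have "kap S (s_layer S (sv_node b))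
        * (s_theta S (sv_vnf b) * sv_Lam I b / range_load S \<epsilon> (sv_rng b))
        \<le> kap S (s_layer S (sv_node b))"
      using node_costs_pos(3)[OF sha_valid_node[OF valid b]] by (intro mult_left_le) auto
    then show ?thesis unfolding sum using True by simp
  next
    case False
    then have "sv_Lam I b = 0"
      unfolding sv_Lam_def using sha_valid_load_nonneg[OF valid b] sum_nonneg[of I "sv_load b"]
      by (simp add: order_less_le)
    then show ?thesis unfolding sum by simp
  qed
qed

lemma used_vm_has_job:
  assumes "b \<in> set vms" "0 < sv_Lam I b"
  obtains t where "t \<in> I" "0 < sv_load b t"
  using assms sha_valid_load_nonneg[OF valid] unfolding sv_Lam_def
  by (metis not_less sum_nonpos)

lemma used_vm_slot:
  assumes b: "b \<in> set vms" and used: "0 < sv_Lam I b"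
  shows "sv_slot b \<in> s_nodes S \<times> s_vnfs S \<times> ranges S \<epsilon>"
proof -
  obtain t where "t \<in> I" "0 < sv_load b t" using used_vm_has_job[OF b used] .
  then have "sv_vnf b \<in> s_vnfs S"
    using sha_valid_load_pos[OF valid b] wf_req_I req_vnf_sub by blast
  moreover have "sv_rng b \<in> ranges S \<epsilon>"
    using sha_valid_headroom[OF valid b used] unfolding ranges_def by simp
  ultimately show ?thesis using sha_valid_node[OF valid b] unfolding sv_slot_def by simp
qed

lemma job_weights_le_used_vms:
  "(\<Sum>t\<in>I. \<Sum>v\<in>r_V (rs ! t). job_weight \<epsilon> t v)
     \<le> (\<Sum>b\<leftarrow>vms. if 0 < sv_Lam I b then kap S (s_layer S (sv_node b)) else 0)"
proof -
  have unused: "load_share b t = 0" if "b \<in> set vms" "sv_vnf b \<notin> r_V (rs ! t)" for b t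
    using sha_valid_load_pos[OF valid that(1), of t] sha_valid_load_nonneg[OF valid that(1), of t] that(2)
    by (force simp: load_share_def)
  have "(\<Sum>t\<in>I. \<Sum>v\<in>r_V (rs ! t). job_weight \<epsilon> t v)
      \<le> (\<Sum>t\<in>I. \<Sum>v\<in>r_V (rs ! t). \<Sum>b\<leftarrow>vms. if sv_vnf b = v then load_share b t else 0)"
    using job_weight_le_load_shares by (intro sum_mono) auto
  also have "\<dots> = (\<Sum>t\<in>I. \<Sum>b\<leftarrow>vms. \<Sum>v\<in>r_V (rs ! t). if sv_vnf b = v then load_share b t else 0)"
    by (simp add: sum_sum_list_swap)
  also have "\<dots> = (\<Sum>t\<in>I. \<Sum>b\<leftarrow>vms. load_share b t)"
    using unused finite_req_vnfs[OF wf_req_I] by (intro sum.cong refl arg_cong[of _ _ sum_list] map_cong) auto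
  also have "\<dots> = (\<Sum>b\<leftarrow>vms. \<Sum>t\<in>I. load_share b t)" by (rule sum_sum_list_swap)
  also have "\<dots> \<le> (\<Sum>b\<leftarrow>vms. if 0 < sv_Lam I b then kap S (s_layer S (sv_node b)) else 0)"
    using load_shares_le_used by (rule sum_list_mono)
  finally show ?thesis .
qed

text \<open>Canonicity leaves at most one partially filled VM per slot.\<close>
lemma partial_vms_le_slot_cost:
  assumes canonical: "sha_canonical S I (asg, vms)"
  shows "(\<Sum>b\<leftarrow>vms. if 0 < sv_Lam I b \<and> sv_cap b \<noteq> s_mubar S then kap S (s_layer S (sv_node b)) else 0)
    \<le> slot_cost \<epsilon>"
proof -
  define P where "P = {a. a < length vms \<and> 0 < sv_Lam I (vms ! a) \<and> sv_cap (vms ! a) \<noteq> s_mubar S}"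
  define lab where "lab a = sv_slot (vms ! a)" for a
  define g :: "('n, 'v) slot \<Rightarrow> real" where "g = (\<lambda>(i, v, j). kap S (s_layer S i))"
  have "inj_on lab P"
    using canonical unfolding inj_on_def P_def lab_def sv_slot_def sha_canonical_def by auto
  moreover have "lab ` P \<subseteq> s_nodes S \<times> s_vnfs S \<times> ranges S \<epsilon>"
  proof (rule image_subsetI)
    fix a assume "a \<in> P"
    then show "lab a \<in> s_nodes S \<times> s_vnfs S \<times> ranges S \<epsilon>"
      unfolding P_def lab_def by (intro used_vm_slot) auto
  qed
  moreover have "0 \<le> g x" if "x \<in> s_nodes S \<times> s_vnfs S \<times> ranges S \<epsilon>" for x
    using that node_costs_pos(3) unfolding g_def by (auto intro: less_imp_le)
  ultimately have "(\<Sum>a\<in>P. g (lab a)) \<le> slot_cost \<epsilon>"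
    unfolding slot_cost_def g_def[symmetric]
    using finite_nodes finite_vnfs finite_ranges[OF lmin_pos eps_pos] by (intro sum_inj_image_le) auto
  moreover have "(\<Sum>b\<leftarrow>vms. if 0 < sv_Lam I b \<and> sv_cap b \<noteq> s_mubar S then kap S (s_layer S (sv_node b)) else 0)
      = (\<Sum>a\<in>P. g (lab a))"
    unfolding sum_list_map_eq_sum_nth P_def g_def lab_def sv_slot_def
    by (simp add: sum.inter_filter[symmetric] lessThan_def)
  ultimately show ?thesis by simp
qed

lemma job_weights_le_fullcost:
  assumes canonical: "sha_canonical S I (asg, vms)"
  shows "(\<Sum>t\<in>I. \<Sum>v\<in>r_V (rs ! t). job_weight \<epsilon> t v) \<le> sha_fullcost S I (asg, vms) + slot_cost \<epsilon>"
proof -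
  have "(\<Sum>b\<leftarrow>vms. if 0 < sv_Lam I b then kap S (s_layer S (sv_node b)) else 0)
      = sha_fullcost S I (asg, vms)
        + (\<Sum>b\<leftarrow>vms. if 0 < sv_Lam I b \<and> sv_cap b \<noteq> s_mubar S then kap S (s_layer S (sv_node b)) else 0)"
    unfolding sha_fullcost_eq sum_list_addf[symmetric] by (intro arg_cong[of _ _ sum_list] map_cong) auto
  then show ?thesis
    using job_weights_le_used_vms partial_vms_le_slot_cost[OF canonical] by linarith
qed

end

section \<open>A canonical optimal SHA placement\<close>

definition jobs :: "(nat \<times> 'v) set" where
  "jobs = Sigma I (\<lambda>t. r_V (rs ! t))"

lemma finite_jobs: "finite jobs"
  unfolding jobs_def using finite_I finite_req_vnfs[OF wf_req_I] by auto

definition admissible :: "(nat \<Rightarrow> 'v \<Rightarrow> 'n) \<Rightarrow> bool" where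
  "admissible asg \<longleftrightarrow>
     (\<forall>(t, v)\<in>jobs. asg t v \<in> s_nodes S \<and> feas_layer S (rs ! t) (s_layer S (asg t v)))"

lemma sha_valid_admissible: "sha_valid S rs \<epsilon> I (asg, vms) \<Longrightarrow> admissible asg"
  unfolding admissible_def jobs_def using sha_valid_assignment by fast

definition slot_of :: "(nat \<Rightarrow> 'v \<Rightarrow> 'n) \<Rightarrow> nat \<Rightarrow> 'v \<Rightarrow> ('n, 'v) slot" where
  "slot_of asg t v = (asg t v, v, range_of \<epsilon> t v)"

definition slots :: "(nat \<Rightarrow> 'v \<Rightarrow> 'n) \<Rightarrow> ('n, 'v) slot set" where
  "slots asg = (\<lambda>(t, v). slot_of asg t v) ` jobs"

definition in_slot :: "(nat \<Rightarrow> 'v \<Rightarrow> 'n) \<Rightarrow> ('n, 'v) slot \<Rightarrow> nat \<Rightarrow> bool" where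
  "in_slot asg g t \<longleftrightarrow> (\<exists>v. (t, v) \<in> jobs \<and> slot_of asg t v = g)"

lemma in_slot_iff: "in_slot asg (i, v, j) t \<longleftrightarrow> (t, v) \<in> jobs \<and> asg t v = i \<and> range_of \<epsilon> t v = j"
  unfolding in_slot_def slot_of_def by auto

definition slot_load :: "(nat \<Rightarrow> 'v \<Rightarrow> 'n) \<Rightarrow> ('n, 'v) slot \<Rightarrow> real" where
  "slot_load asg g = (\<Sum>t\<in>I. if in_slot asg g t then r_lam (rs ! t) else 0)"

text \<open>The number of full VMs the load of a slot would fill.\<close>
definition slot_demand :: "(nat \<Rightarrow> 'v \<Rightarrow> 'n) \<Rightarrow> ('n, 'v) slot \<Rightarrow> real" where
  "slot_demand asg g = (case g of (i, v, j) \<Rightarrow> s_theta S v * slot_load asg g / range_load S \<epsilon> j)"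

definition slot_count :: "(nat \<Rightarrow> 'v \<Rightarrow> 'n) \<Rightarrow> ('n, 'v) slot \<Rightarrow> nat" where
  "slot_count asg g = nat \<lceil>slot_demand asg g\<rceil>"

definition slot_lb :: "(nat \<Rightarrow> 'v \<Rightarrow> 'n) \<Rightarrow> ('n, 'v) slot \<Rightarrow> real" where
  "slot_lb asg g = (case g of (i, v, j) \<Rightarrow>
     real (slot_count asg g) * (s_kf S (s_layer S i) + s_kp S (s_layer S i) * (s_mubar S - range_load S \<epsilon> j))
     + s_kp S (s_layer S i) * s_theta S v * slot_load asg g)"

lemma slotsD:
  assumes adm: "admissible asg" and g: "(i, v, j) \<in> slots asg"
  shows "i \<in> s_nodes S" "v \<in> s_vnfs S" "j \<in> ranges S \<epsilon>" "0 < s_theta S v"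
    "0 < slot_load asg (i, v, j)" "0 < slot_demand asg (i, v, j)"
proof -
  obtain t where t: "(t, v) \<in> jobs" "asg t v = i" "range_of \<epsilon> t v = j"
    using g unfolding slots_def slot_of_def by auto
  then have tI: "t \<in> I" and v: "v \<in> r_V (rs ! t)" unfolding jobs_def by auto
  show "i \<in> s_nodes S" using adm t unfolding admissible_def by auto
  show "v \<in> s_vnfs S" using req_vnf_sub[OF wf_req_I[OF tI] v] .
  show "j \<in> ranges S \<epsilon>" using range_of_I[OF tI v] t by simp
  show theta: "0 < s_theta S v" using theta_pos[OF wf_req_I[OF tI] v] .
  have "r_lam (rs ! t) \<le> slot_load asg (i, v, j)"
    unfolding slot_load_def using t lam_pos[OF wf_req_I] finite_I tI
    by (intro member_le_sum[where i = t, THEN order_trans[rotated]])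
       (auto simp: in_slot_iff intro: less_imp_le)
  then show load: "0 < slot_load asg (i, v, j)" using lam_pos[OF wf_req_I[OF tI]] by linarith
  show "0 < slot_demand asg (i, v, j)"
    unfolding slot_demand_def using theta load range_load_pos[OF lmin_pos eps_pos] by simp
qed

lemma slot_demand_pos: "admissible asg \<Longrightarrow> g \<in> slots asg \<Longrightarrow> 0 < slot_demand asg g"
  using slotsD(6) by (cases g) auto

lemma slot_count_pos: "admissible asg \<Longrightarrow> g \<in> slots asg \<Longrightarrow> 1 \<le> slot_count asg g"
  unfolding slot_count_def using slot_demand_pos by (blast intro: nat_ceiling_bounds)

text \<open>A VM of slot \<open>g\<close> carrying the share \<open>a\<close> of every job of the slot, at the smallest
  capability that meets the delay constraint of its range.\<close>
definition slot_vm :: "(nat \<Rightarrow> 'v \<Rightarrow> 'n) \<Rightarrow> ('n, 'v) slot \<Rightarrow> real \<Rightarrow> ('n, 'v) svm" where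
  "slot_vm asg g a = (case g of (i, v, j) \<Rightarrow>
     \<lparr>sv_node = i, sv_vnf = v, sv_rng = j,
      sv_cap = s_theta S v * a * slot_load asg g + (s_mubar S - range_load S \<epsilon> j),
      sv_load = (\<lambda>t. if in_slot asg g t then a * r_lam (rs ! t) else 0)\<rparr>)"

definition full_share :: "(nat \<Rightarrow> 'v \<Rightarrow> 'n) \<Rightarrow> ('n, 'v) slot \<Rightarrow> real" where
  "full_share asg g = 1 / slot_demand asg g"

definition last_share :: "(nat \<Rightarrow> 'v \<Rightarrow> 'n) \<Rightarrow> ('n, 'v) slot \<Rightarrow> real" where
  "last_share asg g = 1 - (real (slot_count asg g) - 1) / slot_demand asg g"

lemma sv_slot_slot_vm: "sv_slot (slot_vm asg g a) = g"
  unfolding sv_slot_def slot_vm_def by (cases g) auto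

lemma sv_Lam_slot_vm: "sv_Lam I (slot_vm asg g a) = a * slot_load asg g"
  unfolding sv_Lam_def slot_vm_def slot_load_def
  by (cases g) (simp add: sum_distrib_left if_distrib cong: if_cong)

lemma slot_vm_slack:
  "sv_cap (slot_vm asg g a) - s_theta S (sv_vnf (slot_vm asg g a)) * sv_Lam I (slot_vm asg g a)
     = s_mubar S - range_load S \<epsilon> (snd (snd g))"
  unfolding sv_Lam_slot_vm by (cases g) (simp add: slot_vm_def)

lemma slot_shares:
  assumes adm: "admissible asg" and g: "g \<in> slots asg"
    and a: "a = full_share asg g \<or> a = last_share asg g"
  shows "0 < a" "a * slot_demand asg g \<le> 1"
proof -
  define d where "d = slot_demand asg g"
  define k where "k = real (slot_count asg g)"
  have d: "0 < d" unfolding d_def using slot_demand_pos[OF adm g] .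
  have k: "d \<le> k" "k - 1 < d"
    using nat_ceiling_bounds[OF d] unfolding k_def slot_count_def d_def by auto
  have "a = 1 / d \<or> a = 1 - (k - 1) / d"
    using a unfolding full_share_def last_share_def d_def k_def by simp
  then have "0 < a \<and> a * d \<le> 1"
  proof
    assume "a = 1 - (k - 1) / d"
    then have "a = (d - (k - 1)) / d" "a * d = d - (k - 1)" using d by (simp_all add: field_simps)
    then show ?thesis using d k by simp
  qed (use d in simp)
  then show "0 < a" "a * slot_demand asg g \<le> 1" unfolding d_def by auto
qed

lemma slot_shares_sum:
  assumes adm: "admissible asg" and g: "g \<in> slots asg"
  shows "real (slot_count asg g - 1) * full_share asg g + last_share asg g = 1"
proof -
  have d: "0 < slot_demand asg g" using slot_demand_pos[OF adm g] .
  with slot_count_pos[OF adm g] show ?thesis unfolding full_share_def last_share_def by (simp add: of_nat_diff field_simps)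
qed

lemma slot_vm_cap:
  assumes adm: "admissible asg" and g: "g \<in> slots asg"
    and a: "a = full_share asg g \<or> a = last_share asg g"
  shows "sv_cap (slot_vm asg g a) \<le> s_mubar S"
    and "a = full_share asg g \<Longrightarrow> sv_cap (slot_vm asg g a) = s_mubar S"
proof -
  obtain i v j where g_eq: "g = (i, v, j)" by (cases g)
  have RL: "0 < range_load S \<epsilon> j" using range_load_pos[OF lmin_pos eps_pos] .
  have cap: "sv_cap (slot_vm asg g a)
      = a * slot_demand asg g * range_load S \<epsilon> j + (s_mubar S - range_load S \<epsilon> j)"
    unfolding g_eq slot_vm_def slot_demand_def using RL by simp
  show "sv_cap (slot_vm asg g a) \<le> s_mubar S"
    unfolding cap using slot_shares(2)[OF adm g a] RL
    using mult_right_mono[of "a * slot_demand asg g" 1 "range_load S \<epsilon> j"] by simp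
  show "sv_cap (slot_vm asg g a) = s_mubar S" if "a = full_share asg g"
  proof -
    have "0 < slot_demand asg g" using slot_demand_pos[OF adm g] .
    then have "a * slot_demand asg g = 1" using that by (simp add: full_share_def)
    then show ?thesis unfolding cap by simp
  qed
qed

definition slot_list :: "(nat \<Rightarrow> 'v \<Rightarrow> 'n) \<Rightarrow> ('n, 'v) slot list" where
  "slot_list asg = (SOME xs. set xs = slots asg \<and> distinct xs)"

lemma slot_list: "set (slot_list asg) = slots asg" "distinct (slot_list asg)"
proof -
  have "finite (slots asg)" unfolding slots_def using finite_jobs by simp
  then have "\<exists>xs. set xs = slots asg \<and> distinct xs" by (rule finite_distinct_list)
  then show "set (slot_list asg) = slots asg" "distinct (slot_list asg)"
    unfolding slot_list_def by (metis (mono_tags, lifting) someI_ex)+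
qed

definition full_vms :: "(nat \<Rightarrow> 'v \<Rightarrow> 'n) \<Rightarrow> ('n, 'v) svm list" where
  "full_vms asg = concat (map (\<lambda>g. replicate (slot_count asg g - 1) (slot_vm asg g (full_share asg g)))
     (slot_list asg))"

definition last_vms :: "(nat \<Rightarrow> 'v \<Rightarrow> 'n) \<Rightarrow> ('n, 'v) svm list" where
  "last_vms asg = map (\<lambda>g. slot_vm asg g (last_share asg g)) (slot_list asg)"

definition canonical_vms :: "(nat \<Rightarrow> 'v \<Rightarrow> 'n) \<Rightarrow> ('n, 'v) svm list" where
  "canonical_vms asg = full_vms asg @ last_vms asg"

lemma sum_list_canonical_vms:
  "(\<Sum>b\<leftarrow>canonical_vms asg. F b)
     = (\<Sum>g\<in>slots asg. real (slot_count asg g - 1) * F (slot_vm asg g (full_share asg g))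
                       + F (slot_vm asg g (last_share asg g)))"
  unfolding canonical_vms_def full_vms_def last_vms_def
  by (simp add: map_concat sum_list_concat sum_list_replicate o_def sum.distrib
      sum_list_distinct_conv_sum_set[OF slot_list(2)] slot_list(1))

lemma set_canonical_vms:
  "b \<in> set (canonical_vms asg) \<Longrightarrow>
     \<exists>g\<in>slots asg. b = slot_vm asg g (full_share asg g) \<or> b = slot_vm asg g (last_share asg g)"
  unfolding canonical_vms_def full_vms_def last_vms_def using slot_list(1) by auto

lemma canonical_vms_split:
  assumes adm: "admissible asg" and job: "(t, v) \<in> jobs"
  shows "(\<Sum>b\<leftarrow>canonical_vms asg. if sv_vnf b = v then sv_load b t else 0) = r_lam (rs ! t)"
proof -
  have slot: "slot_of asg t v \<in> slots asg" unfolding slots_def using job by force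
  have pick: "(if sv_vnf (slot_vm asg g a) = v then sv_load (slot_vm asg g a) t else 0)
      = (if g = slot_of asg t v then a * r_lam (rs ! t) else 0)" for g a
    using job by (cases g) (auto simp: slot_vm_def in_slot_iff slot_of_def)
  have "(\<Sum>b\<leftarrow>canonical_vms asg. if sv_vnf b = v then sv_load b t else 0)
      = (real (slot_count asg (slot_of asg t v) - 1) * full_share asg (slot_of asg t v)
         + last_share asg (slot_of asg t v)) * r_lam (rs ! t)"
    unfolding sum_list_canonical_vms pick using slot finite_jobs
    by (simp add: if_distrib[of "\<lambda>x. _ * x"] sum.distrib algebra_simps slots_def cong: if_cong)
  then show ?thesis using slot_shares_sum[OF adm slot] by simp
qed

lemma canonical_vms_valid:
  assumes adm: "admissible asg"
  shows "sha_valid S rs \<epsilon> I (asg, canonical_vms asg)"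
proof (rule sha_validI)
  fix t v assume "t \<in> I" "v \<in> r_V (rs ! t)"
  then show "asg t v \<in> s_nodes S \<and> feas_layer S (rs ! t) (s_layer S (asg t v))
      \<and> (\<Sum>b\<leftarrow>canonical_vms asg. if sv_vnf b = v then sv_load b t else 0) = r_lam (rs ! t)"
    using adm canonical_vms_split[OF adm] unfolding admissible_def jobs_def by auto
next
  fix b assume "b \<in> set (canonical_vms asg)"
  then obtain g a where g: "g \<in> slots asg" and a: "a = full_share asg g \<or> a = last_share asg g"
    and b: "b = slot_vm asg g a"
    using set_canonical_vms by blast
  obtain i v j where g_eq: "g = (i, v, j)" by (cases g)
  have slack: "sv_cap b - s_theta S (sv_vnf b) * sv_Lam I b = s_mubar S - range_load S \<epsilon> j"
    unfolding b slot_vm_slack g_eq by simp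
  have "j \<in> ranges S \<epsilon>" using slotsD(3)[OF adm] g unfolding g_eq by simp
  then show "0 < sv_Lam I b \<Longrightarrow> 0 < sv_cap b - s_theta S (sv_vnf b) * sv_Lam I b
      \<and> 1 / (sv_cap b - s_theta S (sv_vnf b) * sv_Lam I b) \<le> Dtop S \<epsilon> (sv_rng b)"
    unfolding slack Dtop_eq ranges_def using g_eq b by (simp add: slot_vm_def)
  show "sv_node b \<in> s_nodes S \<and> sv_cap b \<le> s_mubar S \<and> (\<forall>t. 0 \<le> sv_load b t)"
    using slotsD(1)[OF adm] g slot_vm_cap(1)[OF adm g a] slot_shares(1)[OF adm g a]
      lam_pos[OF wf_req_I]
    unfolding b g_eq by (auto simp: slot_vm_def in_slot_iff jobs_def intro: less_imp_le)
  fix t assume "0 < sv_load b t"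
  then have "in_slot asg g t" unfolding b g_eq by (auto simp: slot_vm_def split: if_splits)
  then show "t \<in> I \<and> sv_vnf b \<in> r_V (rs ! t) \<and> asg t (sv_vnf b) = sv_node b
      \<and> rng_idx S \<epsilon> (Dfair S (rs ! t) (sv_vnf b)) = sv_rng b"
    unfolding b g_eq by (auto simp: slot_vm_def in_slot_iff jobs_def range_of_def)
qed

lemma canonical_vms_canonical:
  assumes adm: "admissible asg"
  shows "sha_canonical S I (asg, canonical_vms asg)"
  unfolding sha_canonical_def snd_conv
proof (intro allI impI)
  fix a c
  assume a: "a < length (canonical_vms asg)" and c: "c < length (canonical_vms asg)"
    and same: "a \<noteq> c \<and> sv_node (canonical_vms asg ! a) = sv_node (canonical_vms asg ! c)
      \<and> sv_vnf (canonical_vms asg ! a) = sv_vnf (canonical_vms asg ! c)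
      \<and> sv_rng (canonical_vms asg ! a) = sv_rng (canonical_vms asg ! c)
      \<and> 0 < sv_Lam I (canonical_vms asg ! a) \<and> 0 < sv_Lam I (canonical_vms asg ! c)"
  define nf where "nf = length (full_vms asg)"
  have full: "sv_cap (canonical_vms asg ! x) = s_mubar S" if "x < nf" for x
  proof -
    have "canonical_vms asg ! x \<in> set (full_vms asg)"
      using that unfolding canonical_vms_def nf_def by (simp add: nth_append)
    then obtain g where "g \<in> slots asg" "canonical_vms asg ! x = slot_vm asg g (full_share asg g)"
      unfolding full_vms_def using slot_list(1) by auto
    then show ?thesis using slot_vm_cap(2)[OF adm] by simp
  qed
  have last: "canonical_vms asg ! x = slot_vm asg (slot_list asg ! (x - nf)) (last_share asg (slot_list asg ! (x - nf)))"
    "x - nf < length (slot_list asg)"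
    if "x < length (canonical_vms asg)" "\<not> x < nf" for x
    using that unfolding canonical_vms_def nf_def last_vms_def by (auto simp: nth_append)
  show "sv_cap (canonical_vms asg ! a) = s_mubar S \<or> sv_cap (canonical_vms asg ! c) = s_mubar S"
  proof (cases "a < nf \<or> c < nf")
    case False
    have "sv_slot (canonical_vms asg ! a) = sv_slot (canonical_vms asg ! c)"
      using same unfolding sv_slot_def by simp
    then have "slot_list asg ! (a - nf) = slot_list asg ! (c - nf)"
      using last(1)[OF a] last(1)[OF c] False by (simp add: sv_slot_slot_vm)
    then have "a - nf = c - nf"
      using nth_eq_iff_index_eq[OF slot_list(2)] last(2)[OF a] last(2)[OF c] False by blast
    then have "a = c" using False by linarith
    then show ?thesis using same by simp
  qed (use full in blast)
qed

lemma canonical_vms_cost: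
  assumes adm: "admissible asg"
  shows "sha_cost S I (asg, canonical_vms asg) = (\<Sum>g\<in>slots asg. slot_lb asg g)"
proof -
  have vm_cost: "(if 0 < sv_Lam I (slot_vm asg g a) then s_kf S (s_layer S (sv_node (slot_vm asg g a)))
        + s_kp S (s_layer S (sv_node (slot_vm asg g a))) * sv_cap (slot_vm asg g a) else 0)
      = (case g of (i, v, j) \<Rightarrow> s_kf S (s_layer S i)
          + s_kp S (s_layer S i) * (s_mubar S - range_load S \<epsilon> j + a * s_theta S v * slot_load asg g))"
    if g: "g \<in> slots asg" and a: "a = full_share asg g \<or> a = last_share asg g" for g a
  proof -
    have "0 < sv_Lam I (slot_vm asg g a)"
      unfolding sv_Lam_slot_vm using slot_shares(1)[OF adm g a] slotsD(5)[OF adm] g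
      by (cases g) auto
    then show ?thesis by (cases g) (simp add: slot_vm_def algebra_simps)
  qed
  have per_slot: "real (slot_count asg g - 1) * (case g of (i, v, j) \<Rightarrow> s_kf S (s_layer S i)
          + s_kp S (s_layer S i) * (s_mubar S - range_load S \<epsilon> j + full_share asg g * s_theta S v * slot_load asg g))
      + (case g of (i, v, j) \<Rightarrow> s_kf S (s_layer S i)
          + s_kp S (s_layer S i) * (s_mubar S - range_load S \<epsilon> j + last_share asg g * s_theta S v * slot_load asg g))
      = slot_lb asg g" if g: "g \<in> slots asg" for g
  proof -
    have last: "last_share asg g = 1 - real (slot_count asg g - 1) * full_share asg g"
      using slot_shares_sum[OF adm g] by simp
    show ?thesis
      unfolding slot_lb_def last using slot_count_pos[OF adm g]
      by (cases g) (simp add: of_nat_diff algebra_simps)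
  qed
  show ?thesis
    unfolding sha_cost_def snd_conv sum_list_canonical_vms using vm_cost per_slot
    by (intro sum.cong refl) auto
qed

text \<open>The cost of a VM at the smallest capability its latency constraint allows.\<close>
definition min_vm_cost :: "('n, 'v) svm \<Rightarrow> real" where
  "min_vm_cost b = s_kf S (s_layer S (sv_node b)) + s_kp S (s_layer S (sv_node b))
     * (s_mubar S - range_load S \<epsilon> (sv_rng b) + s_theta S (sv_vnf b) * sv_Lam I b)"

context
  fixes asg vms assumes valid: "sha_valid S rs \<epsilon> I (asg, vms)"
begin

definition used_vms :: "nat set" where
  "used_vms = {a. a < length vms \<and> 0 < sv_Lam I (vms ! a)}"

definition used_in_slot :: "('n, 'v) slot \<Rightarrow> nat set" where
  "used_in_slot g = {a \<in> used_vms. sv_slot (vms ! a) = g}"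

lemma used_vm_in_slots:
  assumes "a \<in> used_vms"
  shows "sv_slot (vms ! a) \<in> slots asg"
proof -
  have b: "vms ! a \<in> set vms" and used: "0 < sv_Lam I (vms ! a)" using assms unfolding used_vms_def by auto
  obtain t where "t \<in> I" "0 < sv_load (vms ! a) t" using used_vm_has_job[OF valid b used] .
  with sha_valid_load_pos[OF valid b] have "(t, sv_vnf (vms ! a)) \<in> jobs"
    and "slot_of asg t (sv_vnf (vms ! a)) = sv_slot (vms ! a)"
    unfolding jobs_def slot_of_def sv_slot_def range_of_def by auto
  then show ?thesis unfolding slots_def by force
qed

lemma load_in_slot:
  assumes a: "a < length vms"
  shows "(if a \<in> used_in_slot (i, v, j) then sv_load (vms ! a) t else 0)
    = (if in_slot asg (i, v, j) t \<and> sv_vnf (vms ! a) = v then sv_load (vms ! a) t else 0)"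
proof (cases "0 < sv_load (vms ! a) t")
  case True
  have b: "vms ! a \<in> set vms" using a by simp
  have "sv_load (vms ! a) t \<le> sv_Lam I (vms ! a)"
    unfolding sv_Lam_def using True sha_valid_load_pos[OF valid b] sha_valid_load_nonneg[OF valid b]
    by (intro member_le_sum finite_I) auto
  then have "a \<in> used_vms" using a True unfolding used_vms_def by simp
  then show ?thesis
    using sha_valid_load_pos[OF valid b True]
    by (auto simp: used_in_slot_def sv_slot_def in_slot_iff jobs_def range_of_def)
next
  case False
  then have "sv_load (vms ! a) t = 0" using sha_valid_load_nonneg[OF valid, of "vms ! a" t] a by simp
  then show ?thesis by simp
qed

lemma used_in_slot_load: "(\<Sum>a\<in>used_in_slot g. sv_Lam I (vms ! a)) = slot_load asg g"
proof -
  obtain i v j where g: "g = (i, v, j)" by (cases g)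
  have sub: "used_in_slot g \<subseteq> {..<length vms}" unfolding used_in_slot_def used_vms_def by auto
  have "(\<Sum>a\<in>used_in_slot g. sv_load (vms ! a) t) = (if in_slot asg g t then r_lam (rs ! t) else 0)"
    if t: "t \<in> I" for t
  proof -
    have "(\<Sum>a\<in>used_in_slot g. sv_load (vms ! a) t)
        = (\<Sum>a<length vms. if a \<in> used_in_slot g then sv_load (vms ! a) t else 0)"
      using sub by (simp add: sum.If_cases Int_absorb1)
    also have "\<dots> = (\<Sum>a<length vms. if in_slot asg g t \<and> sv_vnf (vms ! a) = v then sv_load (vms ! a) t else 0)"
      unfolding g using load_in_slot by (intro sum.cong) auto
    also have "\<dots> = (if in_slot asg g t then r_lam (rs ! t) else 0)"
      using sha_valid_split[OF valid t, of v] unfolding g in_slot_iff jobs_def sum_list_map_eq_sum_nth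
      by auto
    finally show ?thesis .
  qed
  then show ?thesis
    unfolding sv_Lam_def slot_load_def by (subst sum.swap) (intro sum.cong refl)
qed

lemma slot_count_le_used:
  assumes g: "g \<in> slots asg"
  shows "slot_count asg g \<le> card (used_in_slot g)"
proof -
  obtain i v j where g_eq: "g = (i, v, j)" by (cases g)
  have "s_theta S v * slot_load asg g = (\<Sum>a\<in>used_in_slot g. s_theta S v * sv_Lam I (vms ! a))"
    unfolding used_in_slot_load[symmetric] by (simp add: sum_distrib_left)
  also have "\<dots> \<le> (\<Sum>a\<in>used_in_slot g. range_load S \<epsilon> j)"
  proof (intro sum_mono)
    fix a assume "a \<in> used_in_slot g"
    then have "vms ! a \<in> set vms" "0 < sv_Lam I (vms ! a)" "sv_slot (vms ! a) = (i, v, j)"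
      unfolding used_in_slot_def used_vms_def g_eq by auto
    then show "s_theta S v * sv_Lam I (vms ! a) \<le> range_load S \<epsilon> j"
      using sha_valid_load_le[OF valid] unfolding sv_slot_def by fastforce
  qed
  finally have "slot_demand asg g \<le> real (card (used_in_slot g))"
    unfolding slot_demand_def g_eq using range_load_pos[OF lmin_pos eps_pos] by (simp add: field_simps)
  then show ?thesis unfolding slot_count_def by (simp add: nat_le_iff ceiling_le_iff)
qed

lemma slot_lb_le_used:
  assumes g: "g \<in> slots asg"
  shows "slot_lb asg g \<le> (\<Sum>a\<in>used_in_slot g. min_vm_cost (vms ! a))"
proof -
  obtain i v j where g_eq: "g = (i, v, j)" by (cases g)
  have slot: "i \<in> s_nodes S" "j \<in> ranges S \<epsilon>"
    using slotsD(1,3)[OF sha_valid_admissible[OF valid]] g unfolding g_eq by auto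
  define base where "base = s_kf S (s_layer S i) + s_kp S (s_layer S i) * (s_mubar S - range_load S \<epsilon> j)"
  define c where "c = s_kp S (s_layer S i) * s_theta S v"
  have "min_vm_cost (vms ! a) = base + c * sv_Lam I (vms ! a)" if "a \<in> used_in_slot g" for a
    using that unfolding used_in_slot_def g_eq sv_slot_def min_vm_cost_def base_def c_def
    by (simp add: algebra_simps)
  then have "(\<Sum>a\<in>used_in_slot g. min_vm_cost (vms ! a))
      = (\<Sum>a\<in>used_in_slot g. base + c * sv_Lam I (vms ! a))"
    by (rule sum.cong[OF refl])
  also have "\<dots> = real (card (used_in_slot g)) * base + c * slot_load asg g"
    by (simp add: sum.distrib sum_distrib_left[symmetric] used_in_slot_load)
  finally have sum: "(\<Sum>a\<in>used_in_slot g. min_vm_cost (vms ! a))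
      = real (card (used_in_slot g)) * base + c * slot_load asg g" .
  have "0 < s_mubar S - range_load S \<epsilon> j" using slot(2) unfolding ranges_def by simp
  then have "0 \<le> base" unfolding base_def using node_costs_pos[OF slot(1)] by simp
  then have "real (slot_count asg g) * base \<le> real (card (used_in_slot g)) * base"
    using slot_count_le_used[OF g] by (intro mult_right_mono) auto
  moreover have "slot_lb asg g = real (slot_count asg g) * base + c * slot_load asg g"
    unfolding slot_lb_def g_eq base_def c_def by simp
  ultimately show ?thesis unfolding sum by simp
qed

lemma used_min_cost_le_cost: "(\<Sum>a\<in>used_vms. min_vm_cost (vms ! a)) \<le> sha_cost S I (asg, vms)"
proof -
  have "sha_cost S I (asg, vms) = (\<Sum>a\<in>used_vms. s_kf S (s_layer S (sv_node (vms ! a)))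
      + s_kp S (s_layer S (sv_node (vms ! a))) * sv_cap (vms ! a))"
    unfolding sha_cost_def snd_conv sum_list_map_eq_sum_nth used_vms_def
    by (simp add: sum.inter_filter[symmetric] lessThan_def)
  moreover have "min_vm_cost (vms ! a) \<le> s_kf S (s_layer S (sv_node (vms ! a)))
      + s_kp S (s_layer S (sv_node (vms ! a))) * sv_cap (vms ! a)" if "a \<in> used_vms" for a
  proof -
    have b: "vms ! a \<in> set vms" "0 < sv_Lam I (vms ! a)" using that unfolding used_vms_def by auto
    have "s_mubar S - range_load S \<epsilon> (sv_rng (vms ! a)) + s_theta S (sv_vnf (vms ! a)) * sv_Lam I (vms ! a)
        \<le> sv_cap (vms ! a)"
      using sha_valid_cap_lower[OF valid b] by simp
    then show ?thesis
      unfolding min_vm_cost_def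
      using node_costs_pos(2)[OF sha_valid_node[OF valid b(1)]] by (simp add: mult_left_mono)
  qed
  ultimately show ?thesis by (simp add: sum_mono)
qed

lemma slot_lb_le_cost: "(\<Sum>g\<in>slots asg. slot_lb asg g) \<le> sha_cost S I (asg, vms)"
proof -
  have "(\<Sum>g\<in>slots asg. slot_lb asg g) \<le> (\<Sum>g\<in>slots asg. \<Sum>a\<in>used_in_slot g. min_vm_cost (vms ! a))"
    using slot_lb_le_used by (rule sum_mono)
  also have "\<dots> = (\<Sum>a\<in>used_vms. min_vm_cost (vms ! a))"
    unfolding used_in_slot_def using used_vm_in_slots finite_jobs
    by (intro sum.group) (auto simp: used_vms_def slots_def)
  also have "\<dots> \<le> sha_cost S I (asg, vms)" by (rule used_min_cost_le_cost)
  finally show ?thesis .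
qed

end

definition assignment_lb :: "(nat \<Rightarrow> 'v \<Rightarrow> 'n) \<Rightarrow> real" where
  "assignment_lb asg = (\<Sum>g\<in>slots asg. slot_lb asg g)"

lemma assignment_lb_cong:
  assumes "\<And>t v. (t, v) \<in> jobs \<Longrightarrow> asg t v = asg' t v"
  shows "assignment_lb asg = assignment_lb asg'"
proof -
  have "slots asg = slots asg'" unfolding slots_def slot_of_def using assms by (auto intro!: image_cong)
  moreover have "in_slot asg = in_slot asg'"
    unfolding in_slot_def slot_of_def using assms by (intro ext) auto
  then have "slot_lb asg = slot_lb asg'"
    unfolding slot_lb_def slot_count_def slot_demand_def slot_load_def by simp
  ultimately show ?thesis unfolding assignment_lb_def by simp
qed

lemma exists_canonical_optimum: "\<exists>P. sha_opt S rs \<epsilon> I P \<and> sha_canonical S I P"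
proof -
  define F where "F = {f \<in> jobs \<rightarrow>\<^sub>E s_nodes S. \<forall>(t, v)\<in>jobs. feas_layer S (rs ! t) (s_layer S (f (t, v)))}"
  define asg_of where "asg_of f = (\<lambda>t v. f (t, v))" for f :: "nat \<times> 'v \<Rightarrow> 'n"
  have "finite F" unfolding F_def using finite_PiE[OF finite_jobs, of "\<lambda>_. s_nodes S"] finite_nodes by simp
  moreover obtain i0 where "i0 \<in> s_nodes S" "s_layer S i0 = 0"
    using wf_sys unfolding wf_sys_def by blast
  then have "restrict (\<lambda>_. i0) jobs \<in> F"
    unfolding F_def jobs_def using wf_req_I by (auto simp: wf_req_def)
  ultimately have fin: "finite ((\<lambda>f. assignment_lb (asg_of f)) ` F)" and ne: "F \<noteq> {}" by auto
  then obtain f where f: "f \<in> F" and f_eq: "assignment_lb (asg_of f) = Min ((\<lambda>f. assignment_lb (asg_of f)) ` F)"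
    using Min_in[OF fin] by fastforce
  have f_min: "assignment_lb (asg_of f) \<le> assignment_lb (asg_of f')" if "f' \<in> F" for f'
    unfolding f_eq using fin that by (intro Min_le) auto
  have adm: "admissible (asg_of f)"
    using f unfolding F_def admissible_def asg_of_def by auto
  define P where "P = (asg_of f, canonical_vms (asg_of f))"
  have "sha_cost S I P \<le> sha_cost S I (asg', vms')" if valid': "sha_valid S rs \<epsilon> I (asg', vms')" for asg' vms'
  proof -
    define f' where "f' = restrict (\<lambda>(t, v). asg' t v) jobs"
    have "f' \<in> F"
      using sha_valid_admissible[OF valid'] unfolding F_def f'_def admissible_def by auto
    moreover have "assignment_lb (asg_of f') = assignment_lb asg'"
      by (rule assignment_lb_cong) (simp add: asg_of_def f'_def)
    ultimately show ?thesis
      using f_min slot_lb_le_cost[OF valid'] canonical_vms_cost[OF adm]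
      unfolding P_def assignment_lb_def by fastforce
  qed
  then have "sha_opt S rs \<epsilon> I P"
    unfolding sha_opt_def P_def using canonical_vms_valid[OF adm] by auto
  moreover have "sha_canonical S I P" unfolding P_def using canonical_vms_canonical[OF adm] .
  ultimately show ?thesis by blast
qed

lemma phiSHA_placement:
  obtains asg vms where "phiSHA S rs \<epsilon> I = sha_fullcost S I (asg, vms)"
    "sha_valid S rs \<epsilon> I (asg, vms)" "sha_canonical S I (asg, vms)"
proof -
  define P where "P = (SOME P. sha_opt S rs \<epsilon> I P \<and> sha_canonical S I P)"
  have "sha_opt S rs \<epsilon> I P \<and> sha_canonical S I P"
    unfolding P_def using someI_ex[OF exists_canonical_optimum] .
  then have "sha_valid S rs \<epsilon> I P" "sha_canonical S I P" unfolding sha_opt_def by auto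
  moreover have "phiSHA S rs \<epsilon> I = sha_fullcost S I P" unfolding phiSHA_def P_def ..
  ultimately show ?thesis using that[of "fst P" "snd P"] by simp
qed

lemma phiSHA_nonneg: "0 \<le> phiSHA S rs \<epsilon> I"
proof -
  obtain asg vms where phi: "phiSHA S rs \<epsilon> I = sha_fullcost S I (asg, vms)"
    and valid: "sha_valid S rs \<epsilon> I (asg, vms)"
    using phiSHA_placement by blast
  show ?thesis
    unfolding phi sha_fullcost_eq
    using node_costs_pos(3)[OF sha_valid_node[OF valid]] by (intro sum_list_nonneg) (auto intro: less_imp_le)
qed

lemma job_weights_le_phiSHA:
  "(\<Sum>t\<in>I. \<Sum>v\<in>r_V (rs ! t). job_weight \<epsilon> t v) \<le> phiSHA S rs \<epsilon> I + slot_cost \<epsilon>"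
proof -
  obtain asg vms where "phiSHA S rs \<epsilon> I = sha_fullcost S I (asg, vms)"
    and "sha_valid S rs \<epsilon> I (asg, vms)" "sha_canonical S I (asg, vms)"
    using phiSHA_placement by blast
  then show ?thesis using job_weights_le_fullcost by simp
qed

end

section \<open>Invariants of REShare\<close>

definition rv_label :: "('n, 'v) rvm \<Rightarrow> 'n \<times> 'v \<times> nat \<times> nat" where
  "rv_label b = (rv_node b, rv_vnf b, rv_rng b, rv_int b)"

definition interval_job_sum :: "('n, 'v) rvm list \<Rightarrow> (nat \<Rightarrow> 'v \<Rightarrow> real) \<Rightarrow> nat \<Rightarrow> real" where
  "interval_job_sum vms w h = (\<Sum>b\<leftarrow>vms. if rv_int b = h then (\<Sum>t\<leftarrow>rv_jobs b. w t (rv_vnf b)) else 0)"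

lemma interval_job_sum_update:
  assumes "k < length vms"
  shows "interval_job_sum (vms[k := (vms ! k)\<lparr>rv_jobs := rv_jobs (vms ! k) @ [t]\<rparr>]) w h
    = interval_job_sum vms w h + (if rv_int (vms ! k) = h then w t (rv_vnf (vms ! k)) else 0)"
  using assms unfolding interval_job_sum_def by (simp add: map_update sum_list_list_update)

lemma sigma_set_append:
  "sigma_set (ivl @ [q]) h = (if h = q then insert (length ivl) (sigma_set ivl h) else sigma_set ivl h)"
  unfolding sigma_set_def by (auto simp: nth_append less_Suc_eq)

lemma finite_sigma_set: "finite (sigma_set ivl h)"
  unfolding sigma_set_def by simp

lemma sigma_set_less: "t \<in> sigma_set ivl h \<Longrightarrow> t < length ivl"
  unfolding sigma_set_def by simp

lemma Sq_append: "h \<le> length Ys + 1 \<Longrightarrow> Sq S (Ys @ [Y]) h = Sq S Ys h"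
  unfolding Sq_def by (intro arg_cong2[where f = "(*)"] refl sum.cong) (auto simp: nth_append)

context reshare_instance
begin

text \<open>The last conjunct says that the capability \<^term>\<open>rv_cap S rs b\<close> does not exceed
  the maximal one.\<close>
definition rvm_inv :: "nat list \<Rightarrow> ('n, 'v) rvm \<Rightarrow> bool" where
  "rvm_inv ivl b \<longleftrightarrow> rv_jobs b \<noteq> [] \<and> 1 \<le> rv_int b \<and> rv_node b \<in> s_nodes S
     \<and> (\<forall>t\<in>set (rv_jobs b). t < length ivl \<and> ivl ! t = rv_int b \<and> t < length rs
         \<and> rv_vnf b \<in> r_V (rs ! t) \<and> s_layer S (rv_node b) = lstar S (rs ! t)
         \<and> rv_rng b = range_of (eps S (rv_int b)) t (rv_vnf b)
         \<and> s_theta S (rv_vnf b) * rv_Lam rs b + 1 / Dfair S (rs ! t) (rv_vnf b) \<le> s_mubar S)"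

definition light :: "('n, 'v) rvm \<Rightarrow> bool" where
  "light b \<longleftrightarrow> 2 * s_theta S (rv_vnf b) * rv_Lam rs b \<le> s_lmin S * (1 + eps S (rv_int b)) ^ rv_rng b"

text \<open>Two light VMs with the same label could share their jobs, so REShare never opens
  the second one.\<close>
definition placement_inv :: "nat list \<Rightarrow> ('n, 'v) rvm list \<Rightarrow> bool" where
  "placement_inv ivl vms \<longleftrightarrow> (\<forall>b\<in>set vms. rvm_inv ivl b)
     \<and> inj_on (\<lambda>a. rv_label (vms ! a)) {a. a < length vms \<and> light (vms ! a)}"

lemma rvm_inv_append_ivl: "rvm_inv ivl b \<Longrightarrow> rvm_inv (ivl @ [q]) b"
  unfolding rvm_inv_def by (auto simp: nth_append)

lemma rvm_inv_job:
  assumes b: "rvm_inv ivl b" and t: "t \<in> set (rv_jobs b)"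
  shows "in_range S (eps S (rv_int b)) (rv_rng b) (Dfair S (rs ! t) (rv_vnf b))"
    and "0 < Dfair S (rs ! t) (rv_vnf b)" and "0 < s_theta S (rv_vnf b)"
proof -
  have t_rs: "t < length rs" and v: "rv_vnf b \<in> r_V (rs ! t)" and "1 \<le> rv_int b"
    and "rv_rng b = range_of (eps S (rv_int b)) t (rv_vnf b)"
    using b t unfolding rvm_inv_def by auto
  then show "in_range S (eps S (rv_int b)) (rv_rng b) (Dfair S (rs ! t) (rv_vnf b))"
    using in_range_of by simp
  show "0 < Dfair S (rs ! t) (rv_vnf b)" "0 < s_theta S (rv_vnf b)"
    using Dfair_pos theta_pos wf_req_nth[OF t_rs] v by auto
qed

lemma rv_Lam_nonneg:
  assumes "rvm_inv ivl b"
  shows "0 \<le> rv_Lam rs b"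
  unfolding rv_Lam_def
proof (rule sum_list_nonneg)
  fix x assume "x \<in> set (map (\<lambda>t. r_lam (rs ! t)) (rv_jobs b))"
  then obtain t where "t \<in> set (rv_jobs b)" "x = r_lam (rs ! t)" by auto
  with assms have "t < length rs" "x = r_lam (rs ! t)" unfolding rvm_inv_def by auto
  then show "0 \<le> x" using lam_pos[OF wf_req_nth] by (simp add: less_imp_le)
qed

lemma rv_Lam_add_job: "rv_Lam rs (b\<lparr>rv_jobs := rv_jobs b @ [t]\<rparr>) = rv_Lam rs b + r_lam (rs ! t)"
  by (simp add: rv_Lam_def)

lemma rv_cap_le_mubar:
  assumes b: "rvm_inv ivl b"
  shows "rv_cap S rs b \<le> s_mubar S"
proof -
  define D where "D = (\<lambda>t. Dfair S (rs ! t) (rv_vnf b)) ` set (rv_jobs b)"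
  have "finite D" "D \<noteq> {}" using b unfolding D_def rvm_inv_def by auto
  then have "Min D \<in> D" by (rule Min_in)
  then obtain t where "t \<in> set (rv_jobs b)" "Min D = Dfair S (rs ! t) (rv_vnf b)"
    unfolding D_def by blast
  with b show ?thesis unfolding rv_cap_def D_def[symmetric] rvm_inv_def by auto
qed

definition fresh_vm :: "nat \<Rightarrow> 'n \<Rightarrow> nat \<Rightarrow> 'v \<Rightarrow> ('n, 'v) rvm" where
  "fresh_vm q i t v = \<lparr>rv_node = i, rv_vnf = v, rv_rng = range_of (eps S q) t v, rv_int = q, rv_jobs = [t]\<rparr>"

text \<open>Which viable VM receives the job does not matter for the analysis.\<close>
lemma place1_cases:
  assumes "place1 S rs q (eps S q) t i v vms vms'"
  obtains (join) k where "k < length vms" "viable S rs q (eps S q) t i v (vms ! k)"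
      "vms' = vms[k := (vms ! k)\<lparr>rv_jobs := rv_jobs (vms ! k) @ [t]\<rparr>]"
    | (fresh) "\<forall>k < length vms. \<not> viable S rs q (eps S q) t i v (vms ! k)" "vms' = vms @ [fresh_vm q i t v]"
  using assms unfolding place1_def fresh_vm_def range_of_def by blast

context
  fixes ivl :: "nat list" and q t i v
  assumes t: "t < length rs" "t < length ivl" "ivl ! t = q" and q: "1 \<le> q"
    and v: "v \<in> r_V (rs ! t)" and i: "i \<in> s_nodes S" "s_layer S i = lstar S (rs ! t)"
begin

lemma join_rvm_inv:
  assumes b: "rvm_inv ivl b" and viable: "viable S rs q (eps S q) t i v b"
  shows "rvm_inv ivl (b\<lparr>rv_jobs := rv_jobs b @ [t]\<rparr>)"
proof -
  define x where "x = s_mubar S - s_theta S v * (rv_Lam rs b + r_lam (rs ! t))"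
  have vb: "rv_node b = i" "rv_vnf b = v" "rv_int b = q" "rv_rng b = range_of (eps S q) t v" "0 < x"
    and budget: "\<And>t'. t' \<in> set (rv_jobs b @ [t]) \<Longrightarrow> 1 / x \<le> Dfair S (rs ! t') v"
    using viable unfolding viable_def Let_def x_def range_of_def by auto
  have fits: "s_theta S v * rv_Lam rs (b\<lparr>rv_jobs := rv_jobs b @ [t]\<rparr>) + 1 / Dfair S (rs ! t') v \<le> s_mubar S"
    if "t' \<in> set (rv_jobs b @ [t])" for t'
  proof -
    have "1 / Dfair S (rs ! t') v \<le> x"
      using le_imp_inverse_le[OF budget[OF that]] vb(5) by (simp add: inverse_eq_divide)
    then show ?thesis unfolding rv_Lam_add_job x_def by simp
  qed
  show ?thesis
    using b fits t v i(2) vb(1-4) unfolding rvm_inv_def by auto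
qed

lemma fresh_rvm_inv: "rvm_inv ivl (fresh_vm q i t v)"
  using t q v i Dfair_fits[OF wf_req_nth[OF t(1)] v]
  unfolding rvm_inv_def fresh_vm_def rv_Lam_def by auto

lemma nonviable_overloaded:
  assumes b: "rvm_inv ivl b" and label: "rv_label b = rv_label (fresh_vm q i t v)"
    and nonviable: "\<not> viable S rs q (eps S q) t i v b"
  shows "s_lmin S * (1 + eps S q) ^ rv_rng b < s_theta S v * (rv_Lam rs b + r_lam (rs ! t))"
proof -
  define x where "x = s_mubar S - s_theta S v * (rv_Lam rs b + r_lam (rs ! t))"
  have vb: "rv_node b = i" "rv_vnf b = v" "rv_int b = q" "rv_rng b = range_of (eps S q) t v"
    using label unfolding rv_label_def fresh_vm_def by auto
  define budgets where "budgets = insert (Dfair S (rs ! t) v) ((\<lambda>t'. Dfair S (rs ! t') v) ` set (rv_jobs b))"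
  have below: "s_lmin S * (1 + eps S q) ^ rv_rng b \<le> s_mubar S - 1 / D" and pos: "0 < D"
    if "D \<in> budgets" for D
  proof -
    have "0 < D \<and> in_range S (eps S q) (rv_rng b) D"
      using that rvm_inv_job[OF b] in_range_of[OF t(1) v q] Dfair_pos[OF wf_req_nth[OF t(1)] v] vb
      unfolding budgets_def by auto
    then show "0 < D" "s_lmin S * (1 + eps S q) ^ rv_rng b \<le> s_mubar S - 1 / D"
      using in_range_lower[OF lmin_pos eps_pos] by auto
  qed
  have "\<not> (0 < x \<and> (\<forall>D\<in>budgets. 1 / x \<le> D))"
    using nonviable vb unfolding viable_def Let_def x_def budgets_def range_of_def by auto
  then obtain D where "D \<in> budgets" "x < 1 / D"
  proof (cases "0 < x")
    case True
    with \<open>\<not> (0 < x \<and> _)\<close> obtain D where D: "D \<in> budgets" "D < 1 / x" by auto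
    with True pos[OF D(1)] have "x < 1 / D" by (simp add: field_simps)
    with D(1) show ?thesis by (rule that)
  next
    case False
    have D: "Dfair S (rs ! t) v \<in> budgets" unfolding budgets_def by simp
    then have "0 < 1 / Dfair S (rs ! t) v" using pos by simp
    with False have "x < 1 / Dfair S (rs ! t) v" by linarith
    with D show ?thesis by (rule that)
  qed
  with below show ?thesis unfolding x_def by fastforce
qed

lemma join_placement_inv:
  assumes inv: "placement_inv ivl vms" and k: "k < length vms"
    and viable: "viable S rs q (eps S q) t i v (vms ! k)"
  shows "placement_inv ivl (vms[k := (vms ! k)\<lparr>rv_jobs := rv_jobs (vms ! k) @ [t]\<rparr>])"
proof -
  define b' where "b' = (vms ! k)\<lparr>rv_jobs := rv_jobs (vms ! k) @ [t]\<rparr>"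
  have "rvm_inv ivl b'" using join_rvm_inv inv k viable unfolding placement_inv_def b'_def by simp
  then have ok: "\<forall>b\<in>set (vms[k := b']). rvm_inv ivl b'"
    using inv set_update_subset_insert unfolding placement_inv_def by blast
  have "rv_vnf (vms ! k) = v" using viable unfolding viable_def Let_def by simp
  then have "s_theta S (rv_vnf (vms ! k)) * rv_Lam rs (vms ! k) \<le> s_theta S (rv_vnf b') * rv_Lam rs b'"
    unfolding b'_def rv_Lam_add_job using theta_pos[OF wf_req_nth[OF t(1)] v] lam_pos[OF wf_req_nth[OF t(1)]]
    by simp
  then have "light b' \<Longrightarrow> light (vms ! k)" unfolding light_def by (simp add: b'_def)
  then have "light (vms ! a)" if "a < length vms" "light (vms[k := b'] ! a)" for a
    using that by (cases "a = k") (simp_all add: k)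
  then have "{a. a < length (vms[k := b']) \<and> light (vms[k := b'] ! a)} \<subseteq> {a. a < length vms \<and> light (vms ! a)}"
    by auto
  moreover have "rv_label (vms[k := b'] ! a) = rv_label (vms ! a)" for a
    by (cases "a = k") (simp_all add: k b'_def rv_label_def)
  ultimately have "inj_on (\<lambda>a. rv_label (vms[k := b'] ! a)) {a. a < length (vms[k := b']) \<and> light (vms[k := b'] ! a)}"
    using inv unfolding placement_inv_def by (metis (no_types, lifting) inj_on_cong inj_on_subset)
  with inv set_update_subset_insert[of vms k b'] \<open>rvm_inv ivl b'\<close> show ?thesis
    unfolding placement_inv_def b'_def[symmetric] by blast
qed

lemma fresh_placement_inv:
  assumes inv: "placement_inv ivl vms"
    and nonviable: "\<forall>k < length vms. \<not> viable S rs q (eps S q) t i v (vms ! k)"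
  shows "placement_inv ivl (vms @ [fresh_vm q i t v])"
proof -
  define new where "new = fresh_vm q i t v"
  define L where "L = {a. a < length vms \<and> light (vms ! a)}"
  have no_twin: "rv_label (vms ! c) \<noteq> rv_label new" if c: "c \<in> L" and "light new" for c
  proof
    assume same: "rv_label (vms ! c) = rv_label new"
    have cv: "rvm_inv ivl (vms ! c)" using inv c unfolding placement_inv_def L_def by simp
    have "s_lmin S * (1 + eps S q) ^ rv_rng (vms ! c) < s_theta S v * (rv_Lam rs (vms ! c) + r_lam (rs ! t))"
      using nonviable_overloaded[OF cv] same nonviable c unfolding new_def L_def by blast
    moreover have "2 * s_theta S v * rv_Lam rs (vms ! c) \<le> s_lmin S * (1 + eps S q) ^ rv_rng (vms ! c)"
      "2 * s_theta S v * r_lam (rs ! t) \<le> s_lmin S * (1 + eps S q) ^ rv_rng (vms ! c)"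
      using c \<open>light new\<close> same unfolding L_def light_def new_def fresh_vm_def rv_label_def rv_Lam_def
      by auto
    ultimately show False by (simp add: algebra_simps)
  qed
  have labels: "rv_label ((vms @ [new]) ! a) = rv_label (vms ! a)" if "a \<in> L" for a
    using that unfolding L_def by (simp add: nth_append)
  have old: "inj_on (\<lambda>a. rv_label ((vms @ [new]) ! a)) L"
    using inv labels unfolding placement_inv_def L_def[symmetric] by (metis (no_types, lifting) inj_on_cong)
  have lights: "{a. a < length (vms @ [new]) \<and> light ((vms @ [new]) ! a)}
      = (if light new then insert (length vms) L else L)"
    unfolding L_def by (auto simp: nth_append less_Suc_eq)
  have "rv_label ((vms @ [new]) ! length vms) \<notin> (\<lambda>a. rv_label ((vms @ [new]) ! a)) ` L" if "light new"
  proof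
    assume "rv_label ((vms @ [new]) ! length vms) \<in> (\<lambda>a. rv_label ((vms @ [new]) ! a)) ` L"
    then obtain c where "c \<in> L" "rv_label new = rv_label (vms ! c)"
      using labels by (auto simp: nth_append)
    with no_twin[OF _ that] show False by metis
  qed
  moreover have "length vms \<notin> L" unfolding L_def by simp
  ultimately have "inj_on (\<lambda>a. rv_label ((vms @ [new]) ! a)) {a. a < length (vms @ [new]) \<and> light ((vms @ [new]) ! a)}"
    unfolding lights using old by auto
  moreover have "rvm_inv ivl new" unfolding new_def by (rule fresh_rvm_inv)
  ultimately show ?thesis using inv unfolding placement_inv_def new_def by auto
qed

lemma place1_preserves:
  assumes inv: "placement_inv ivl vms" and place: "place1 S rs q (eps S q) t i v vms vms'"
  shows "placement_inv ivl vms' \<and>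
    (\<forall>w h. interval_job_sum vms' w h = interval_job_sum vms w h + (if h = q then w t v else 0))"
  using place
proof (cases rule: place1_cases)
  case (join k)
  have "rv_int (vms ! k) = q" "rv_vnf (vms ! k) = v" using join(2) unfolding viable_def Let_def by auto
  then show ?thesis
    using join_placement_inv[OF inv join(1,2)] interval_job_sum_update[OF join(1)] join(3) by auto
next
  case fresh
  then show ?thesis
    using fresh_placement_inv[OF inv fresh(1)] by (auto simp: interval_job_sum_def fresh_vm_def)
qed

end

lemma place_all_preserves:
  assumes "place_all S rs q (eps S q) t i vs vms vms'"
    and "t < length rs" "t < length ivl" "ivl ! t = q" "1 \<le> q"
    and "i \<in> s_nodes S" "s_layer S i = lstar S (rs ! t)"
    and "set vs \<subseteq> r_V (rs ! t)" and "placement_inv ivl vms"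
  shows "placement_inv ivl vms' \<and>
    (\<forall>w h. interval_job_sum vms' w h = interval_job_sum vms w h + (if h = q then (\<Sum>v\<leftarrow>vs. w t v) else 0))"
  using assms(1,8,9)
proof (induction rule: place_all.induct)
  case (2 v vms vms1 vs vms2)
  then have "v \<in> r_V (rs ! t)" "placement_inv ivl vms" by simp_all
  from place1_preserves[OF assms(2-5) this(1) assms(6,7) this(2) 2(1)] 2 show ?case by simp
qed simp

definition placement_state_inv :: "('n, 'v) rstate \<Rightarrow> bool" where
  "placement_state_inv st \<longleftrightarrow> length (st_ivl st) \<le> length rs
     \<and> placement_inv (st_ivl st) (st_vms st)
     \<and> (\<forall>w h. interval_job_sum (st_vms st) w h = (\<Sum>t\<in>sigma_set (st_ivl st) h. \<Sum>v\<in>r_V (rs ! t). w t v))"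

definition records_inv :: "('n, 'v) rstate \<Rightarrow> bool" where
  "records_inv st \<longleftrightarrow> (\<forall>h. 1 \<le> h \<and> h \<le> length (st_Y st) \<longrightarrow>
     st_Y st ! (h - 1) = phiSHA S rs (eps S h) (sigma_set (st_ivl st) h)
     \<and> Cq S h \<le> st_Y st ! (h - 1) \<and> Sq S (st_Y st) h \<le> st_Y st ! (h - 1))"

lemma stepE:
  assumes "step S rs st st'"
  obtains i vs where "length (st_ivl st) < length rs"
    "i \<in> s_nodes S" "s_layer S i = lstar S (rs ! length (st_ivl st))"
    "distinct vs" "set vs = r_V (rs ! length (st_ivl st))"
    "place_all S rs (length (st_Y st) + 1) (eps S (length (st_Y st) + 1)) (length (st_ivl st)) i vs
       (st_vms st) (st_vms st')"
    "st_ivl st' = st_ivl st @ [length (st_Y st) + 1]"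
    "st_Y st' = (let q = length (st_Y st) + 1; Y = phiSHA S rs (eps S q) (sigma_set (st_ivl st') q) in
       if max (Cq S q) (Sq S (st_Y st) q) \<le> Y then st_Y st @ [Y] else st_Y st)"
  using assms unfolding step_def Let_def by auto

lemma step_placement_state_inv:
  assumes inv: "placement_state_inv st" and step: "step S rs st st'"
  shows "placement_state_inv st'"
proof -
  define t where "t = length (st_ivl st)"
  define q where "q = length (st_Y st) + 1"
  obtain i vs where t: "t < length rs" and i: "i \<in> s_nodes S" "s_layer S i = lstar S (rs ! t)"
    and vs: "distinct vs" "set vs = r_V (rs ! t)"
    and place: "place_all S rs q (eps S q) t i vs (st_vms st) (st_vms st')"
    and ivl': "st_ivl st' = st_ivl st @ [q]"
    using stepE[OF step] unfolding t_def q_def by metis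
  have "placement_inv (st_ivl st') (st_vms st)"
    using inv rvm_inv_append_ivl unfolding placement_state_inv_def placement_inv_def ivl' by blast
  moreover have "t < length (st_ivl st')" "st_ivl st' ! t = q" "1 \<le> q"
    unfolding ivl' t_def q_def by simp_all
  ultimately have placed: "placement_inv (st_ivl st') (st_vms st') \<and>
      (\<forall>w h. interval_job_sum (st_vms st') w h
        = interval_job_sum (st_vms st) w h + (if h = q then (\<Sum>v\<leftarrow>vs. w t v) else 0))"
    using place_all_preserves[OF place t _ _ _ i equalityD1[OF vs(2)]] by blast
  have "t \<notin> sigma_set (st_ivl st) h" for h using sigma_set_less unfolding t_def by blast
  then have "interval_job_sum (st_vms st') w h = (\<Sum>t\<in>sigma_set (st_ivl st') h. \<Sum>v\<in>r_V (rs ! t). w t v)"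
    for w h
    using placed inv finite_sigma_set sum_list_distinct_conv_sum_set[OF vs(1)] vs(2)
    unfolding placement_state_inv_def ivl' sigma_set_append t_def[symmetric] by auto
  with placed t show ?thesis unfolding placement_state_inv_def ivl' t_def by simp
qed

lemma step_records_inv:
  assumes inv: "records_inv st" and step: "step S rs st st'"
  shows "records_inv st'"
  unfolding records_inv_def
proof (intro allI impI)
  define q where "q = length (st_Y st) + 1"
  define Y where "Y = phiSHA S rs (eps S q) (sigma_set (st_ivl st') q)"
  have ivl': "st_ivl st' = st_ivl st @ [q]"
    and Y': "st_Y st' = (if max (Cq S q) (Sq S (st_Y st) q) \<le> Y then st_Y st @ [Y] else st_Y st)"
    using stepE[OF step] unfolding q_def Y_def Let_def by metis+
  fix h assume h: "1 \<le> h \<and> h \<le> length (st_Y st')"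
  show "st_Y st' ! (h - 1) = phiSHA S rs (eps S h) (sigma_set (st_ivl st') h)
      \<and> Cq S h \<le> st_Y st' ! (h - 1) \<and> Sq S (st_Y st') h \<le> st_Y st' ! (h - 1)"
  proof (cases "h \<le> length (st_Y st)")
    case True
    then have "st_Y st' ! (h - 1) = st_Y st ! (h - 1)" "Sq S (st_Y st') h = Sq S (st_Y st) h"
      "sigma_set (st_ivl st') h = sigma_set (st_ivl st) h"
      using h Y' unfolding ivl' sigma_set_append q_def by (auto simp: nth_append Sq_append)
    moreover have "st_Y st ! (h - 1) = phiSHA S rs (eps S h) (sigma_set (st_ivl st) h)
        \<and> Cq S h \<le> st_Y st ! (h - 1) \<and> Sq S (st_Y st) h \<le> st_Y st ! (h - 1)"
      using inv h True unfolding records_inv_def by blast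
    ultimately show ?thesis by simp
  next
    case False
    with h Y' have new: "h = q" "st_Y st' = st_Y st @ [Y]" "max (Cq S q) (Sq S (st_Y st) q) \<le> Y"
      unfolding q_def by (auto split: if_splits)
    then show ?thesis unfolding Y_def q_def by (simp add: Sq_append)
  qed
qed

definition reshare_inv :: "('n, 'v) rstate \<Rightarrow> bool" where
  "reshare_inv st \<longleftrightarrow> placement_state_inv st \<and> records_inv st"

lemma reach_reshare_inv: "reach S rs st \<Longrightarrow> reshare_inv st"
proof (induction rule: reach.induct)
  case 1
  then show ?case
    unfolding reshare_inv_def placement_state_inv_def placement_inv_def records_inv_def
      interval_job_sum_def sigma_set_def by simp
next
  case (2 st st')
  then show ?case
    unfolding reshare_inv_def using step_placement_state_inv step_records_inv by blast
qed

section \<open>The cost of an interval\<close>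

lemma rv_cost_le_kap:
  assumes b: "rvm_inv ivl b"
  shows "rv_cost S rs b \<le> kap S (s_layer S (rv_node b))"
proof -
  have "rv_node b \<in> s_nodes S" using b unfolding rvm_inv_def by simp
  then show ?thesis
    unfolding rv_cost_def kap_def using rv_cap_le_mubar[OF b] node_costs_pos(2) by (simp add: mult_left_mono)
qed

lemma rvm_job_weights:
  assumes b: "rvm_inv ivl b"
  shows "(\<Sum>t\<leftarrow>rv_jobs b. job_weight (eps S (rv_int b)) t (rv_vnf b))
    = kap S (s_layer S (rv_node b)) * s_theta S (rv_vnf b) * rv_Lam rs b
      / range_load S (eps S (rv_int b)) (rv_rng b)"
proof -
  define c where "c = kap S (s_layer S (rv_node b)) * s_theta S (rv_vnf b)
    / range_load S (eps S (rv_int b)) (rv_rng b)"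
  have "job_weight (eps S (rv_int b)) t (rv_vnf b) = c * r_lam (rs ! t)" if "t \<in> set (rv_jobs b)" for t
    using b that unfolding rvm_inv_def job_weight_def c_def by simp
  then have "(\<Sum>t\<leftarrow>rv_jobs b. job_weight (eps S (rv_int b)) t (rv_vnf b)) = (\<Sum>t\<leftarrow>rv_jobs b. c * r_lam (rs ! t))"
    by (intro arg_cong[of _ _ sum_list] map_cong) auto
  also have "\<dots> = c * rv_Lam rs b" unfolding rv_Lam_def by (rule sum_list_const_mult)
  finally show ?thesis unfolding c_def by simp
qed

lemma rv_cost_le_charge:
  assumes b: "rvm_inv ivl b"
  shows "rv_cost S rs b \<le> (if light b then kap S (s_layer S (rv_node b)) else 0)
    + 2 * (1 + eps S (rv_int b)) * (\<Sum>t\<leftarrow>rv_jobs b. job_weight (eps S (rv_int b)) t (rv_vnf b))"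
proof -
  define e where "e = eps S (rv_int b)"
  define A where "A = s_lmin S * (1 + e) ^ rv_rng b"
  define \<kappa> where "\<kappa> = kap S (s_layer S (rv_node b))"
  have e: "0 < e" unfolding e_def by (rule eps_pos)
  then have A: "0 < A" unfolding A_def using lmin_pos by simp
  have \<kappa>: "0 < \<kappa>" using b node_costs_pos(3) unfolding \<kappa>_def rvm_inv_def by simp
  obtain t where "t \<in> set (rv_jobs b)" using b unfolding rvm_inv_def by (cases "rv_jobs b") auto
  then have "0 < s_theta S (rv_vnf b)" by (rule rvm_inv_job(3)[OF b])
  then have nonneg: "0 \<le> \<kappa> * (2 * s_theta S (rv_vnf b) * rv_Lam rs b / A)"
    using \<kappa> A rv_Lam_nonneg[OF b] by simp
  have "range_load S e (rv_rng b) = (1 + e) * A" unfolding range_load_def A_def by simp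
  then have charge: "2 * (1 + e) * (\<Sum>t\<leftarrow>rv_jobs b. job_weight e t (rv_vnf b))
      = \<kappa> * (2 * s_theta S (rv_vnf b) * rv_Lam rs b / A)"
  proof -
    have "0 < A + A * e" using e A by (simp add: add_pos_pos)
    with A show ?thesis
      unfolding rvm_job_weights[OF b, folded e_def] \<kappa>_def[symmetric] \<open>range_load S e (rv_rng b) = (1 + e) * A\<close>
      by (simp add: field_simps)
  qed
  moreover have "\<kappa> \<le> \<kappa> * (2 * s_theta S (rv_vnf b) * rv_Lam rs b / A)" if "\<not> light b"
    using that \<kappa> A unfolding light_def A_def[symmetric] e_def[symmetric] by (simp add: field_simps)
  ultimately show ?thesis
    using rv_cost_le_kap[OF b] nonneg unfolding e_def[symmetric] \<kappa>_def[symmetric] by auto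
qed

lemma light_cost_le_slot_cost:
  assumes inv: "placement_inv ivl vms" and h: "1 \<le> h"
  shows "(\<Sum>b\<leftarrow>vms. if rv_int b = h \<and> light b then kap S (s_layer S (rv_node b)) else 0) \<le> slot_cost (eps S h)"
proof -
  define L where "L = {a. a < length vms \<and> light (vms ! a) \<and> rv_int (vms ! a) = h}"
  define lab where "lab a = (rv_node (vms ! a), rv_vnf (vms ! a), rv_rng (vms ! a))" for a
  define g :: "'n \<times> 'v \<times> nat \<Rightarrow> real" where "g = (\<lambda>(i, v, j). kap S (s_layer S i))"
  have "inj_on (\<lambda>a. rv_label (vms ! a)) {a. a < length vms \<and> light (vms ! a)}"
    using inv unfolding placement_inv_def by blast
  then have "inj_on (\<lambda>a. rv_label (vms ! a)) L" by (rule inj_on_subset) (auto simp: L_def)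
  then have "inj_on lab L"
    unfolding inj_on_def L_def lab_def rv_label_def by auto
  moreover have "lab ` L \<subseteq> s_nodes S \<times> s_vnfs S \<times> ranges S (eps S h)"
  proof (rule image_subsetI)
    fix a assume "a \<in> L"
    then have b: "rvm_inv ivl (vms ! a)" "rv_int (vms ! a) = h" using inv unfolding placement_inv_def L_def by auto
    then obtain t where t: "t \<in> set (rv_jobs (vms ! a))" "t < length rs" "rv_vnf (vms ! a) \<in> r_V (rs ! t)"
      unfolding rvm_inv_def by (cases "rv_jobs (vms ! a)") auto
    have "rv_rng (vms ! a) \<in> ranges S (eps S h)"
      using in_range_headroom[OF lmin_pos eps_pos rvm_inv_job(2,1)[OF b(1) t(1)]] b(2) unfolding ranges_def by simp
    then show "lab a \<in> s_nodes S \<times> s_vnfs S \<times> ranges S (eps S h)"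
      using b t req_vnf_sub[OF wf_req_nth] unfolding lab_def rvm_inv_def by auto
  qed
  moreover have "0 \<le> g x" if "x \<in> s_nodes S \<times> s_vnfs S \<times> ranges S (eps S h)" for x
    using that node_costs_pos(3) unfolding g_def by (auto intro: less_imp_le)
  ultimately have "(\<Sum>a\<in>L. g (lab a)) \<le> slot_cost (eps S h)"
    unfolding slot_cost_def g_def[symmetric]
    using finite_nodes finite_vnfs finite_ranges[OF lmin_pos eps_pos] by (intro sum_inj_image_le) auto
  moreover have "(\<Sum>b\<leftarrow>vms. if rv_int b = h \<and> light b then kap S (s_layer S (rv_node b)) else 0)
      = (\<Sum>a\<in>L. g (lab a))"
    unfolding sum_list_map_eq_sum_nth L_def g_def lab_def
    by (simp add: sum.inter_filter[symmetric] lessThan_def conj_commute)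
  ultimately show ?thesis by simp
qed

lemma phiRES_le_charges:
  assumes inv: "placement_state_inv st" and h: "1 \<le> h"
  shows "phiRES S rs st h \<le> slot_cost (eps S h)
    + 2 * (1 + eps S h) * (\<Sum>t\<in>sigma_set (st_ivl st) h. \<Sum>v\<in>r_V (rs ! t). job_weight (eps S h) t v)"
proof -
  have ok: "rvm_inv (st_ivl st) b" if "b \<in> set (st_vms st)" for b
    using inv that unfolding placement_state_inv_def placement_inv_def by blast
  have "phiRES S rs st h \<le> (\<Sum>b\<leftarrow>st_vms st. (if rv_int b = h \<and> light b then kap S (s_layer S (rv_node b)) else 0)
      + 2 * (1 + eps S h) * (if rv_int b = h then (\<Sum>t\<leftarrow>rv_jobs b. job_weight (eps S h) t (rv_vnf b)) else 0))"
    unfolding phiRES_def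
  proof (intro sum_list_mono)
    fix b assume "b \<in> set (st_vms st)"
    note charge = rv_cost_le_charge[OF ok[OF this]]
    show "(if rv_int b = h then rv_cost S rs b else 0)
      \<le> (if rv_int b = h \<and> light b then kap S (s_layer S (rv_node b)) else 0)
        + 2 * (1 + eps S h) * (if rv_int b = h then \<Sum>t\<leftarrow>rv_jobs b. job_weight (eps S h) t (rv_vnf b) else 0)"
      using charge by (cases "rv_int b = h") auto
  qed
  also have "\<dots> = (\<Sum>b\<leftarrow>st_vms st. if rv_int b = h \<and> light b then kap S (s_layer S (rv_node b)) else 0)
      + 2 * (1 + eps S h) * interval_job_sum (st_vms st) (job_weight (eps S h)) h"
    unfolding interval_job_sum_def by (simp add: sum_list_addf sum_list_const_mult)
  also have "\<dots> \<le> slot_cost (eps S h)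
      + 2 * (1 + eps S h) * (\<Sum>t\<in>sigma_set (st_ivl st) h. \<Sum>v\<in>r_V (rs ! t). job_weight (eps S h) t v)"
  proof -
    have "placement_inv (st_ivl st) (st_vms st)" using inv unfolding placement_state_inv_def by simp
    with inv show ?thesis
      using light_cost_le_slot_cost[OF _ h] unfolding placement_state_inv_def by simp
  qed
  finally show ?thesis .
qed

lemma sha_instance_interval:
  assumes "placement_state_inv st" "1 \<le> h"
  shows "sha_instance S rs h (sigma_set (st_ivl st) h)"
proof
  show "sigma_set (st_ivl st) h \<subseteq> {..<length rs}"
  proof
    fix t assume "t \<in> sigma_set (st_ivl st) h"
    then have "t < length (st_ivl st)" by (rule sigma_set_less)
    with assms(1) show "t \<in> {..<length rs}" unfolding placement_state_inv_def by simp
  qed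
qed (use assms(2) in simp)

lemma recorded_cost:
  assumes inv: "reshare_inv st" and h: "1 \<le> h" "h \<le> length (st_Y st)"
  shows "st_Y st ! (h - 1) = phiSHA S rs (eps S h) (sigma_set (st_ivl st) h)"
    and "0 \<le> st_Y st ! (h - 1)"
proof -
  show Y: "st_Y st ! (h - 1) = phiSHA S rs (eps S h) (sigma_set (st_ivl st) h)"
    using inv h unfolding reshare_inv_def records_inv_def by blast
  interpret sha: sha_instance S rs h "sigma_set (st_ivl st) h"
    using inv h(1) unfolding reshare_inv_def by (blast intro: sha_instance_interval)
  show "0 \<le> st_Y st ! (h - 1)" unfolding Y by (rule sha.phiSHA_nonneg)
qed

lemma interval_cost_le:
  assumes inv: "reshare_inv st" and h: "1 \<le> h" "h \<le> length (st_Y st)"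
  shows "phiRES S rs st h \<le> (2 + 3 * eps S h) * st_Y st ! (h - 1)"
proof -
  define e where "e = eps S h"
  define Y where "Y = st_Y st ! (h - 1)"
  define W where "W = (\<Sum>t\<in>sigma_set (st_ivl st) h. \<Sum>v\<in>r_V (rs ! t). job_weight e t v)"
  have placed: "placement_state_inv st" and "Cq S h \<le> Y"
    using inv h unfolding reshare_inv_def records_inv_def Y_def by auto
  interpret sha: sha_instance S rs h "sigma_set (st_ivl st) h"
    using placed h(1) by (rule sha_instance_interval)
  have "phiRES S rs st h \<le> slot_cost e + 2 * (1 + e) * W"
    using phiRES_le_charges[OF placed h(1)] unfolding W_def e_def .
  also have "\<dots> \<le> slot_cost e + 2 * (1 + e) * (Y + slot_cost e)"
    using sha.job_weights_le_phiSHA eps_pos[of h] recorded_cost(1)[OF inv h]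
    unfolding W_def Y_def e_def by simp
  also have "\<dots> = 2 * (1 + e) * Y + (3 + 2 * e) * slot_cost e" by (simp add: algebra_simps)
  also have "\<dots> \<le> 2 * (1 + e) * Y + e * Y"
    using slot_cost_le_threshold[OF h(1) \<open>Cq S h \<le> Y\<close> recorded_cost(2)[OF inv h, folded Y_def]]
    unfolding e_def by simp
  finally show ?thesis unfolding Y_def e_def by (simp add: algebra_simps)
qed

text \<open>The interval was closed only once its cost exceeded \<^term>\<open>Sq S (st_Y st) k\<close>.\<close>
lemma earlier_intervals_le:
  assumes inv: "reshare_inv st" and k: "1 \<le> k" "k \<le> length (st_Y st)"
  shows "(\<Sum>h = 1..k - 1. (2 + 3 * eps S h) * st_Y st ! (h - 1)) \<le> eps S k * st_Y st ! (k - 1)"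
proof -
  have "Sq S (st_Y st) k \<le> st_Y st ! (k - 1)"
    using inv k unfolding reshare_inv_def records_inv_def by blast
  with eps_pos[of k] show ?thesis unfolding Sq_def by (simp add: field_simps)
qed

end

theorem lemma5:
  fixes S :: "('n, 'v) sys" and rs :: "'v req list" and st :: "('n, 'v) rstate" and k :: nat
  assumes "wf_sys S"
    and "\<forall>r\<in>set rs. wf_req S r"
    and "reach S rs st"
    and "1 \<le> k" and "k \<le> length (st_Y st)"
  shows "(\<Sum>h = 1..k. phiRES S rs st h)
           \<le> (2 + 4 * eps S k) * (\<Sum>h = 1..k. phiSHA S rs (eps S h) (sigma_set (st_ivl st) h))"
proof -
  interpret reshare_instance S rs using assms(1,2) by unfold_locales
  have inv: "reshare_inv st" using assms(3) by (rule reach_reshare_inv)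
  define Y where "Y h = st_Y st ! (h - 1)" for h
  have "(\<Sum>h = 1..k. phiRES S rs st h) \<le> (\<Sum>h = 1..k. (2 + 3 * eps S h) * Y h)"
    using interval_cost_le[OF inv] assms(5) unfolding Y_def by (intro sum_mono) auto
  also have "\<dots> = (2 + 3 * eps S k) * Y k + (\<Sum>h = 1..k - 1. (2 + 3 * eps S h) * Y h)"
    using assms(4) by (cases k) (simp_all add: atLeastAtMostSuc_conv add.commute)
  also have "\<dots> \<le> (2 + 4 * eps S k) * Y k"
    using earlier_intervals_le[OF inv assms(4,5)] unfolding Y_def by (simp add: algebra_simps)
  also have "\<dots> \<le> (2 + 4 * eps S k) * (\<Sum>h = 1..k. Y h)"
    using recorded_cost(2)[OF inv] assms(4,5) eps_pos[of k]
    by (intro mult_left_mono member_le_sum) (auto simp: Y_def)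
  also have "(\<Sum>h = 1..k. Y h) = (\<Sum>h = 1..k. phiSHA S rs (eps S h) (sigma_set (st_ivl st) h))"
    using recorded_cost(1)[OF inv] assms(5) unfolding Y_def by (intro sum.cong) auto
  finally show ?thesis .
qed

end
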